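(* Let $m,n$ be relatively prime positive integers and $\pi$ an $(m,n)$-Dyck path. Then \[ h_+(\pi)-\frac{(m-1)(n-1)}2-\sum_{v\in v^*(\pi)} k(v) \;=\; -\sum_{p\in i(\pi)\cup v_*(\pi)} k(p). \]
   Context: An $(m,n)$-Dyck path is a lattice path from $(0,0)$ to $(m,n)$ with steps $(1,0)$ (horizontal) and $(0,1)$ (vertical) staying weakly above the diagonal $y=\frac nm x$. "The line through a point $p$" means the line through $p$ parallel to the diagonal. For a lattice point $p$, $k(p)$ is the number of vertical steps of $\pi$ not containing $p$ that the line through $p$ intersects. An outer vertex of $\pi$ is a vertex where a vertical step is followed by a horizontal step, an internal vertex one where a horizontal step is followed by a vertical step; $v^*(\pi)$ is the set of outer vertices except the one farthest from the diagonal, and $v_*(\pi)$ is the set of internal vertices. $i(\pi)$ is the set of lattice points lying strictly between $\pi$ and the diagonal. $h_+(\pi)$ is the number of pairs $(s_1,s_2)$ with $s_1$ a horizontal step, $s_2$ a vertical step of $\pi$, $s_1$ to the left of $s_2$, such that some line parallel to the diagonal intersects both $s_1$ and $s_2$. *)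

theory Defs
  imports "HOL-Analysis.Analysis"
begin

text \<open>A lattice path is a list of steps: True = vertical step (0,1), False = horizontal step (1,0).
  Vertex i is the lattice point reached after the first i steps (vertices 0 .. length P).\<close>

definition vtx :: "bool list \<Rightarrow> nat \<Rightarrow> int \<times> int" where
  "vtx P i = (int (length (filter Not (take i P))), int (length (filter id (take i P))))"

definition rpt :: "int \<times> int \<Rightarrow> real \<times> real" where
  "rpt p = (real_of_int (fst p), real_of_int (snd p))"

definition dyck_path :: "nat \<Rightarrow> nat \<Rightarrow> bool list \<Rightarrow> bool" where
  "dyck_path m n P \<longleftrightarrow> length (filter Not P) = m \<and> length (filter id P) = n \<and>
     (\<forall>i \<le> length P. int n * fst (vtx P i) \<le> int m * snd (vtx P i))"

definition step_seg :: "bool list \<Rightarrow> nat \<Rightarrow> (real \<times> real) set" where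
  "step_seg P i = closed_segment (rpt (vtx P i)) (rpt (vtx P (Suc i)))"

definition diag_line :: "nat \<Rightarrow> nat \<Rightarrow> real \<Rightarrow> (real \<times> real) set" where
  "diag_line m n c = {q. real n * fst q - real m * snd q = c}"

definition line_through :: "nat \<Rightarrow> nat \<Rightarrow> int \<times> int \<Rightarrow> (real \<times> real) set" where
  "line_through m n p = diag_line m n (real n * fst (rpt p) - real m * snd (rpt p))"

definition kval :: "nat \<Rightarrow> nat \<Rightarrow> bool list \<Rightarrow> int \<times> int \<Rightarrow> nat" where
  "kval m n P p = card {i. i < length P \<and> P ! i \<and> rpt p \<notin> step_seg P i \<and>
       line_through m n p \<inter> step_seg P i \<noteq> {}}"

definition outer_vertices :: "bool list \<Rightarrow> (int \<times> int) set" where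
  "outer_vertices P = {vtx P (Suc i) | i. Suc i < length P \<and> P ! i \<and> \<not> P ! Suc i}"

definition internal_vertices :: "bool list \<Rightarrow> (int \<times> int) set" where
  "internal_vertices P = {vtx P (Suc i) | i. Suc i < length P \<and> \<not> P ! i \<and> P ! Suc i}"

definition diag_dist :: "nat \<Rightarrow> nat \<Rightarrow> int \<times> int \<Rightarrow> real" where
  "diag_dist m n p = \<bar>real n * fst (rpt p) - real m * snd (rpt p)\<bar> / sqrt ((real m)\<^sup>2 + (real n)\<^sup>2)"

definition vstar :: "nat \<Rightarrow> nat \<Rightarrow> bool list \<Rightarrow> (int \<times> int) set" where
  "vstar m n P = outer_vertices P -
     {v \<in> outer_vertices P. \<forall>w \<in> outer_vertices P. diag_dist m n w \<le> diag_dist m n v}"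

definition inner_points :: "nat \<Rightarrow> nat \<Rightarrow> bool list \<Rightarrow> (int \<times> int) set" where
  "inner_points m n P = {(a, b). 0 \<le> a \<and> a \<le> int m \<and> int n * a < int m * b \<and>
      (\<forall>j \<le> length P. fst (vtx P j) = a \<longrightarrow> b < snd (vtx P j))}"

definition h_plus :: "nat \<Rightarrow> nat \<Rightarrow> bool list \<Rightarrow> nat" where
  "h_plus m n P = card {(i, j). i < length P \<and> j < length P \<and> \<not> P ! i \<and> P ! j \<and>
      fst (vtx P i) < fst (vtx P j) \<and>
      (\<exists>c. diag_line m n c \<inter> step_seg P i \<noteq> {} \<and> diag_line m n c \<inter> step_seg P j \<noteq> {})}"

end

theory Submission
  imports Defs
begin

text \<open>Measure the position of a lattice point q = (x, y) by its level n x - m y: lines parallel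
  to the diagonal are level sets, the path stays at levels \<le> 0, a vertical step lowers the
  level by m and a horizontal step raises it by n. Since m and n are coprime, the lattice points
  of the strip 0 \<le> x < m have pairwise distinct levels, so the levels strictly inside a vertical
  step are attained by exactly m - 1 points of the strip, one at each column offset d = 1 .. m - 1
  (modulo m) from the step. All k-values of points in the strip therefore count pairs
  (point, vertical step).

  Comparing, at each vertex, the two steps meeting there shows that h_+ plus the k-values of
  inner points and internal vertices, minus the k-values of outer vertices, counts the pairs whose
  point lies weakly under the path on the side facing the step. (The outer vertex farthest from
  the diagonal sees no step, so leaving it out of v* changes nothing.) Sorting these pairs by the
  offset d, the rows contributing for d and for m - d are complementary except for a single row,
  so offsets d and m - d together contribute n - 1 pairs and all offsets (m - 1)(n - 1)/2.\<close>

section \<open>Arithmetic of a coprime pair\<close>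

locale coprime_pair =
  fixes m n :: nat
  assumes m_pos: "0 < m" and n_pos: "0 < n" and coprime_mn: "coprime m n"
begin

text \<open>For 0 < d < m, m never divides n d, so rise d is the ceiling of n d / m: the lowest
  lattice point strictly above the diagonal in column d is (d, rise d).\<close>

definition rise :: "nat \<Rightarrow> nat" where "rise d = n * d div m + 1"

lemma coprime_not_dvd_mult: assumes "0 < d" "d < m" shows "\<not> m dvd n * d"
proof
  assume "m dvd n * d"
  hence "m dvd d" using coprime_mn by (simp add: coprime_dvd_mult_right_iff)
  thus False using assms by (simp add: nat_dvd_not_less)
qed

lemma rise_bounds: assumes "0 < d" "d < m"
  shows "m * (rise d - 1) < n * d" "n * d < m * rise d" "rise d \<le> n" "1 \<le> rise d"
proof -
  have e: "m * (n * d div m) + n * d mod m = n * d" by (rule mult_div_mod_eq)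
  have r: "m * (rise d - 1) = m * (n * d div m)" by (simp add: rise_def)
  have "n * d mod m > 0" using coprime_not_dvd_mult assms by (simp add: dvd_eq_mod_eq_0)
  then show "m * (rise d - 1) < n * d" unfolding r using e by linarith
  have "n * d mod m < m" using m_pos by simp
  moreover have "m * rise d = m * (n * d div m) + m" by (simp add: rise_def)
  ultimately show "n * d < m * rise d" using e by linarith
  have "n * d div m < n" using assms n_pos by (simp add: div_less_iff_less_mult mult.commute)
  then show "rise d \<le> n" unfolding rise_def by simp
  show "1 \<le> rise d" unfolding rise_def by simp
qed

lemma rise_complement: assumes "0 < d" "d < m" shows "rise (m - d) = n + 1 - rise d"
proof -
  define q where "q = n * d div m"
  define r where "r = n * d mod m"
  have e: "m * q + r = n * d" unfolding q_def r_def by (rule mult_div_mod_eq)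
  have r0: "r > 0" using coprime_not_dvd_mult[OF assms]
    unfolding r_def by (simp add: dvd_eq_mod_eq_0)
  have r1: "r < m" using m_pos unfolding r_def by simp
  have qn: "q < n" using assms n_pos
    unfolding q_def by (simp add: div_less_iff_less_mult mult.commute)
  define k where "k = n - q - 1"
  have k: "n = q + 1 + k" using qn unfolding k_def by simp
  define t where "t = m - d"
  have t: "m = d + t" using assms unfolding t_def by simp
  have ee: "q * t + r = d + d * k" using e unfolding k t by (simp add: algebra_simps)
  have "n * (m - d) div m = k"
  proof (rule div_nat_eqI)
    show "m * k \<le> n * (m - d)" using ee r1 unfolding k t by (simp add: algebra_simps)
    show "n * (m - d) < m * Suc k" using ee r0 unfolding k t by (simp add: algebra_simps)
  qed
  thus ?thesis unfolding rise_def q_def[symmetric] k_def using qn by simp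
qed

lemma rise_bounds_int: assumes "0 < d" "d < m"
  shows "int m * (int (rise d) - 1) < int n * int d" "int n * int d < int m * int (rise d)"
proof -
  have b: "m * (rise d - 1) < n * d" "n * d < m * rise d" "1 \<le> rise d"
    using rise_bounds assms by auto
  show "int m * (int (rise d) - 1) < int n * int d" using b(1) b(3)
    by (metis of_nat_1 of_nat_diff of_nat_less_iff of_nat_mult)
  show "int n * int d < int m * int (rise d)" using b(2) by (metis of_nat_less_iff of_nat_mult)
qed

lemma rise_unique: assumes "0 < d" "d < m"
  and "- int m \<le> int n * int d - int m * e" "int n * int d - int m * e \<le> 0"
  shows "e = int (rise d)"
proof -
  have "int m * (int (rise d) - 1) < int m * e"
    using rise_bounds_int[OF assms(1,2)] assms(4) by linarith
  hence "int (rise d) - 1 < e" using m_pos by (simp add: mult_less_cancel_left_pos)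
  moreover have "int m * e < int m * (int (rise d) + 1)"
    using rise_bounds_int[OF assms(1,2)] assms(3) by (simp add: algebra_simps)
  hence "e < int (rise d) + 1" using m_pos by (simp add: mult_less_cancel_left_pos)
  ultimately show ?thesis by linarith
qed

lemma above_diag_pos: assumes "0 \<le> a" "int n * a < int m * b" shows "0 < b"
proof -
  have "0 \<le> int n * a" using assms(1) by simp
  hence "0 < int m * b" using assms(2) by linarith
  thus ?thesis using m_pos by (simp add: zero_less_mult_iff)
qed

lemma level_eq_in_strip:
  fixes a b c e :: int
  assumes "int n * a - int m * b = int n * c - int m * e" "\<bar>a - c\<bar> < int m"
  shows "a = c \<and> b = e"
proof -
  have eq: "int n * (a - c) = int m * (b - e)" using assms(1) by (simp add: algebra_simps)
  moreover have "coprime (int m) (int n)" using coprime_mn by simp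
  ultimately have "int m dvd (a - c)" by (metis coprime_dvd_mult_right_iff dvd_triv_left)
  then obtain k where k: "a - c = int m * k" by (auto simp: dvd_def)
  hence "int m * \<bar>k\<bar> < int m * 1" using assms(2) by (simp add: abs_mult)
  hence "k = 0" using m_pos by (simp only: mult_less_cancel_left) simp
  hence "a = c" using k by simp
  moreover have "b = e" using eq \<open>a = c\<close> m_pos by simp
  ultimately show ?thesis by simp
qed

end

section \<open>Staircases\<close>

text \<open>col y is the column of the vertical step at height y of a Dyck path, and col_ext is its
  extension to the translate of the path by (m, n). For the lattice point d columns to the right
  of that step and rise d rows above its bottom, fits_right d y says that it lies weakly to the
  right of the path; fits_left d y says the same for the point one row lower, which (after
  translating by (-m, -n)) is the relevant one when the offset wraps around the strip.\<close>

locale staircase = coprime_pair +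
  fixes col :: "nat \<Rightarrow> nat"
  assumes col_mono: "\<And>y z. y \<le> z \<Longrightarrow> z < n
    \<Longrightarrow> col y \<le> col z"
    and col_below_diag: "\<And>y. y < n \<Longrightarrow> n * col y \<le> m * y"
begin

definition col_ext :: "nat \<Rightarrow> nat" where
  "col_ext z = (if z < n then col z else col (z - n) + m)"

definition fits_right :: "nat \<Rightarrow> nat \<Rightarrow> bool" where
  "fits_right d r \<longleftrightarrow> col_ext (r + rise d) \<le> col r + d"

definition fits_left :: "nat \<Rightarrow> nat \<Rightarrow> bool" where
  "fits_left d r \<longleftrightarrow> col_ext (r + rise d - 1) < col r + d"

definition fit_count :: "nat \<Rightarrow> nat" where
  "fit_count d =
     (\<Sum>y<n. if col y + d < m then of_bool (fits_right d y) else of_bool (fits_left d y))"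

definition first_row :: "nat \<Rightarrow> nat" where
  "first_row c = (LEAST y. y = n \<or> (y < n \<and> c \<le> col y))"

lemma first_row_le: "first_row c \<le> n"
  unfolding first_row_def by (rule Least_le) simp

lemma less_first_row_iff: assumes "y < n" shows "col y < c \<longleftrightarrow> y < first_row c"
proof
  assume a: "col y < c"
  show "y < first_row c"
  proof (rule ccontr)
    assume "\<not> y < first_row c"
    hence le: "first_row c \<le> y" by simp
    have "first_row c = n \<or> (first_row c < n \<and> c \<le> col (first_row c))"
      unfolding first_row_def by (rule LeastI[of _ n]) simp
    thus False using le assms a col_mono[of "first_row c" y] by auto
  qed
next
  assume "y < first_row c"
  hence "\<not> (y = n \<or> (y < n \<and> c \<le> col y))"
    unfolding first_row_def by (rule not_less_Least)
  thus "col y < c" using assms by auto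
qed

lemma col_0: "col 0 = 0" using col_below_diag[of 0] n_pos by simp

lemma col_less: assumes "y < n" shows "col y < m"
proof -
  have "n * col y \<le> m * y" using col_below_diag assms by simp
  also have "\<dots> < m * n" using assms m_pos by simp
  finally have "n * col y < n * m" by (simp add: mult.commute)
  thus ?thesis by simp
qed

context
  fixes d :: nat
  assumes d_pos: "0 < d" and d_less: "d < m"
begin

lemma rise_le_first_row: "rise d \<le> first_row d"
proof (rule ccontr)
  assume "\<not> rise d \<le> first_row d"
  hence lt: "first_row d < rise d" by simp
  have "first_row d < n" using lt rise_bounds[OF d_pos d_less] by simp
  hence "\<not> col (first_row d) < d" using less_first_row_iff by simp
  moreover have "n * col (first_row d) < n * d"
  proof -
    have "n * col (first_row d) \<le> m * first_row d"
      using col_below_diag \<open>first_row d < n\<close> by simp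
    also have "\<dots> \<le> m * (rise d - 1)" using lt by (intro mult_le_mono2) simp
    also have "\<dots> < n * d" using rise_bounds[OF d_pos d_less] by simp
    finally show ?thesis .
  qed
  ultimately show False by simp
qed

lemma col_complement_row: "col (n - rise d) < m - d"
proof -
  have b: "n * d < m * rise d" "rise d \<le> n" "1 \<le> rise d"
    using rise_bounds[OF d_pos d_less] by auto
  have "n * col (n - rise d) \<le> m * (n - rise d)" using col_below_diag b n_pos by simp
  also have "\<dots> = m * n - m * rise d" by (simp add: diff_mult_distrib2)
  also have "\<dots> < m * n - n * d"
    using b(1) d_less n_pos by (intro diff_less_mono2) (simp_all add: mult.commute)
  also have "\<dots> = n * (m - d)" by (simp add: diff_mult_distrib2 mult.commute)
  finally show ?thesis by simp
qed

lemma complement_row_less_first_row: "n - rise d < first_row (m - d)"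
  using col_complement_row less_first_row_iff[of "n - rise d" "m - d"]
    rise_bounds[OF d_pos d_less] n_pos by simp

lemma not_fits_right_complement_row: "\<not> fits_right d (n - rise d)"
proof -
  have "col_ext (n - rise d + rise d) = m"
    using rise_bounds[OF d_pos d_less] col_0 unfolding col_ext_def by simp
  moreover have "col (n - rise d) + d < m" using col_complement_row d_less by simp
  ultimately show ?thesis unfolding fits_right_def by simp
qed

lemma fits_below_first_row:
  assumes "r + rise d < first_row d" shows "fits_right d r" "fits_left d r"
proof -
  have b: "rise d \<le> first_row d" "first_row d \<le> n" "1 \<le> rise d"
    using rise_le_first_row first_row_le rise_bounds[OF d_pos d_less] by auto
  have "col (r + rise d) < d" using less_first_row_iff[of "r + rise d" d] assms b by simp
  moreover have "col (r + rise d - 1) \<le> col (r + rise d)"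
    using col_mono[of "r + rise d - 1" "r + rise d"] assms b by simp
  ultimately show "fits_right d r" "fits_left d r"
    unfolding fits_right_def fits_left_def col_ext_def using assms b by auto
qed

lemma fits_above_complement_first_row:
  assumes "first_row (m - d) \<le> r" "r < n - rise d" shows "fits_right d r" "fits_left d r"
proof -
  have b: "rise d \<le> n" "1 \<le> rise d" using rise_bounds[OF d_pos d_less] by auto
  have "\<not> col r < m - d" using less_first_row_iff assms by simp
  moreover have "col (r + rise d) < m" "col (r + rise d - 1) < m"
    using col_less assms b by simp_all
  ultimately show "fits_right d r" "fits_left d r"
    unfolding fits_right_def fits_left_def col_ext_def using assms b by auto
qed

lemma not_fits_above_complement_row:
  assumes "n - rise d < r" "r < first_row (m - d)" "r < n"
  shows "\<not> fits_right d r" "\<not> fits_left d r"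
proof -
  have "col r < m - d" using less_first_row_iff[of r "m - d"] assms by simp
  moreover have "n \<le> r + rise d - 1" using assms rise_bounds[OF d_pos d_less] by simp
  ultimately show "\<not> fits_right d r" "\<not> fits_left d r"
    unfolding fits_right_def fits_left_def col_ext_def by auto
qed

lemma fits_left_first_row: "fits_left d (first_row d - rise d)"
proof -
  have b: "rise d \<le> first_row d" "first_row d \<le> n" "1 \<le> rise d"
    using rise_le_first_row first_row_le rise_bounds[OF d_pos d_less] by auto
  have "first_row d - 1 < n" using b by simp
  moreover have "col (first_row d - 1) < d"
    using less_first_row_iff[of "first_row d - 1" d] b by simp
  ultimately show ?thesis unfolding fits_left_def col_ext_def using b by simp
qed

text \<open>fit_term r is the summand of fit_count d at row r; cofit_term r is the summand of
  fit_count (m - d) that the duality lemmas below attach to row r.\<close>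

definition fit_term :: "nat \<Rightarrow> nat" where
  "fit_term r =
     (if r < first_row (m - d) then of_bool (fits_right d r) else of_bool (fits_left d r))"

definition cofit_term :: "nat \<Rightarrow> nat" where
  "cofit_term r =
     (if r = n - rise d then 0
      else if first_row d - rise d \<le> r \<and> r < n - rise d then of_bool (\<not> fits_right d r)
      else of_bool (\<not> fits_left d r))"

lemma fit_term_plus_cofit_term:
  assumes "r < n" shows "fit_term r + cofit_term r = (if r = n - rise d then 0 else 1)"
proof -
  have b: "rise d \<le> first_row d" "first_row d \<le> n"
    using rise_le_first_row first_row_le by auto
  have c: "n - rise d < first_row (m - d)" by (rule complement_row_less_first_row)
  consider "r = n - rise d" | "r < first_row d - rise d"
    | "first_row d - rise d \<le> r" "r < n - rise d" | "n - rise d < r" by linarith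
  then show ?thesis
  proof cases
    case 1
    then show ?thesis using not_fits_right_complement_row c
      unfolding fit_term_def cofit_term_def by simp
  next
    case 2
    then have "r + rise d < first_row d" "r \<noteq> n - rise d" using b by auto
    then show ?thesis using 2 fits_below_first_row
      unfolding fit_term_def cofit_term_def by simp
  next
    case 3
    then show ?thesis using fits_above_complement_first_row[of r]
      unfolding fit_term_def cofit_term_def by auto
  next
    case 4
    then show ?thesis using not_fits_above_complement_row[of r] assms
      unfolding fit_term_def cofit_term_def by auto
  qed
qed

lemma fit_count_eq: "fit_count d = (\<Sum>r<n. fit_term r)"
  unfolding fit_count_def fit_term_def
proof (rule sum.cong[OF refl])
  fix y assume "y \<in> {..<n}"
  hence "col y + d < m \<longleftrightarrow> y < first_row (m - d)"
    using less_first_row_iff[of y "m - d"] by auto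
  thus "(if col y + d < m then of_bool (fits_right d y) else of_bool (fits_left d y)) =
        (if y < first_row (m - d) then of_bool (fits_right d y) else of_bool (fits_left d y))"
          by simp
qed

definition dual_term :: "nat \<Rightarrow> nat" where
  "dual_term y =
     (if col y + (m - d) < m then of_bool (fits_right (m - d) y)
      else of_bool (fits_left (m - d) y))"

lemma fit_count_dual: "fit_count (m - d) = (\<Sum>y<n. dual_term y)"
  unfolding fit_count_def dual_term_def ..

text \<open>The offsets d and m - d are dual: rows y and y - rise d (taken modulo n) exchange roles,
  and the fits for the two offsets compare col y with col (y - rise d) + d with opposite
  strictness.\<close>

lemma dual_term_upper:
  assumes "first_row d \<le> y" "y < n"
  shows "dual_term y = of_bool (\<not> fits_right d (y - rise d))"
proof -
  have b: "rise d \<le> n" "1 \<le> rise d" using rise_bounds[OF d_pos d_less] by auto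
  have y2: "rise d \<le> first_row d" using rise_le_first_row by auto
  have xy: "d \<le> col y" using less_first_row_iff[of y d] assms by simp
  have ds: "rise (m - d) = n + 1 - rise d" by (rule rise_complement[OF d_pos d_less])
  have e1: "y + rise (m - d) - 1 = (y - rise d) + n" using ds assms y2 b by simp
  have e2: "y - rise d + rise d = y" using assms y2 by simp
  have "fits_left (m - d) y \<longleftrightarrow> col (y - rise d) + d < col y"
    unfolding fits_left_def col_ext_def e1 using xy d_less by auto
  moreover have "fits_right d (y - rise d) \<longleftrightarrow> col y \<le> col (y - rise d) + d"
    unfolding fits_right_def col_ext_def e2 using assms by simp
  ultimately show ?thesis unfolding dual_term_def using xy d_less by auto
qed

lemma dual_term_middle:
  assumes "r < first_row d + 1 - rise d"
  shows "dual_term (r + (rise d - 1)) = of_bool (\<not> fits_left d r)"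
proof -
  have b: "rise d \<le> n" "1 \<le> rise d" using rise_bounds[OF d_pos d_less] by auto
  have y2: "rise d \<le> first_row d" "first_row d \<le> n"
    using rise_le_first_row first_row_le by auto
  define y where "y = r + (rise d - 1)"
  have yl: "y < first_row d" "y < n" using assms y2 b unfolding y_def by auto
  have xy: "col y < d" using less_first_row_iff[of y d] yl by simp
  have ds: "rise (m - d) = n + 1 - rise d" by (rule rise_complement[OF d_pos d_less])
  have e1: "y + rise (m - d) = r + n" using ds b unfolding y_def by simp
  have e2: "r + rise d - 1 = y" using b unfolding y_def by simp
  have "fits_right (m - d) y \<longleftrightarrow> col r + d \<le> col y"
    unfolding fits_right_def col_ext_def e1 using d_less by auto
  moreover have "fits_left d r \<longleftrightarrow> col y < col r + d"
    unfolding fits_left_def col_ext_def e2 using yl by simp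
  ultimately show ?thesis unfolding dual_term_def y_def[symmetric] using xy d_less by auto
qed

lemma dual_term_lower:
  assumes "y < rise d - 1"
  shows "dual_term y = of_bool (\<not> fits_left d (y + (n + 1 - rise d)))"
proof -
  have b: "rise d \<le> n" "1 \<le> rise d" using rise_bounds[OF d_pos d_less] by auto
  have y2: "rise d \<le> first_row d" "first_row d \<le> n"
    using rise_le_first_row first_row_le by auto
  have yl: "y < first_row d" "y < n" using assms y2 b by auto
  have xy: "col y < d" using less_first_row_iff[of y d] yl by simp
  have ds: "rise (m - d) = n + 1 - rise d" by (rule rise_complement[OF d_pos d_less])
  define r where "r = y + (n + 1 - rise d)"
  have rl: "r < n" using assms b unfolding r_def by simp
  have e1: "y + rise (m - d) = r" using ds b unfolding r_def by simp
  have e2: "r + rise d - 1 = y + n" using b unfolding r_def by simp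
  have "fits_right (m - d) y \<longleftrightarrow> col r \<le> col y + (m - d)"
    unfolding fits_right_def col_ext_def e1 using rl by simp
  moreover have "fits_left d r \<longleftrightarrow> col y + m < col r + d"
    unfolding fits_left_def col_ext_def e2 using yl by simp
  ultimately show ?thesis unfolding dual_term_def r_def[symmetric] using xy d_less by auto
qed

definition misfit_count :: nat where
  "misfit_count =
     (\<Sum>r\<in>{first_row d - rise d..<n - rise d}. of_bool (\<not> fits_right d r))
     + (\<Sum>r\<in>{0..<first_row d + 1 - rise d}. of_bool (\<not> fits_left d r))
     + (\<Sum>r\<in>{n + 1 - rise d..<n}. of_bool (\<not> fits_left d r))"

lemma fit_count_complement: "fit_count (m - d) = misfit_count"
proof -
  let ?a = "first_row d - rise d" and ?b = "first_row d + 1 - rise d"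
    and ?c = "n + 1 - rise d" and ?e = "rise d - 1"
  have b: "rise d \<le> n" "1 \<le> rise d" using rise_bounds[OF d_pos d_less] by auto
  have y2: "rise d \<le> first_row d" "first_row d \<le> n"
    using rise_le_first_row first_row_le by auto
  have split: "(\<Sum>y<n. dual_term y) = (\<Sum>y\<in>{0..<?e}. dual_term y)
      + (\<Sum>y\<in>{?e..<first_row d}. dual_term y)
        + (\<Sum>y\<in>{first_row d..<n}. dual_term y)"
    unfolding lessThan_atLeast0 using y2 b by (simp add: sum.atLeastLessThan_concat)
  have A: "(\<Sum>y\<in>{first_row d..<n}. dual_term y)
      = (\<Sum>r\<in>{?a..<n - rise d}. of_bool (\<not> fits_right d r))"
  proof -
    have "(\<Sum>y\<in>{first_row d..<n}. dual_term y)
        = (\<Sum>y\<in>{?a + rise d..<(n - rise d) + rise d}. dual_term y)"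
      using y2 b by simp
    also have "\<dots> = (\<Sum>r\<in>{?a..<n - rise d}. dual_term (r + rise d))"
      by (rule sum.shift_bounds_nat_ivl)
    also have "\<dots> = (\<Sum>r\<in>{?a..<n - rise d}. of_bool (\<not> fits_right d r))"
      by (rule sum.cong[OF refl]) (use dual_term_upper y2 b in auto)
    finally show ?thesis .
  qed
  have B: "(\<Sum>y\<in>{?e..<first_row d}. dual_term y)
    = (\<Sum>r\<in>{0..<?b}. of_bool (\<not> fits_left d r))"
  proof -
    have "(\<Sum>y\<in>{?e..<first_row d}. dual_term y)
      = (\<Sum>y\<in>{0 + ?e..<?b + ?e}. dual_term y)"
      using y2 b by simp
    also have "\<dots> = (\<Sum>r\<in>{0..<?b}. dual_term (r + ?e))"
      by (rule sum.shift_bounds_nat_ivl)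
    also have "\<dots> = (\<Sum>r\<in>{0..<?b}. of_bool (\<not> fits_left d r))"
      by (rule sum.cong[OF refl]) (use dual_term_middle in auto)
    finally show ?thesis .
  qed
  have C: "(\<Sum>y\<in>{0..<?e}. dual_term y)
    = (\<Sum>r\<in>{?c..<n}. of_bool (\<not> fits_left d r))"
  proof -
    have "(\<Sum>r\<in>{?c..<n}. of_bool (\<not> fits_left d r))
        = (\<Sum>r\<in>{0 + ?c..<?e + ?c}. of_bool (\<not> fits_left d r))"
      using y2 b by simp
    also have "\<dots> = (\<Sum>y\<in>{0..<?e}. of_bool (\<not> fits_left d (y + ?c)))"
      by (rule sum.shift_bounds_nat_ivl)
    also have "\<dots> = (\<Sum>y\<in>{0..<?e}. dual_term y)"
      by (rule sum.cong[OF refl]) (use dual_term_lower in auto)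
    finally show ?thesis by simp
  qed
  show ?thesis unfolding fit_count_dual split A B C misfit_count_def by simp
qed

lemma sum_cofit_term: "(\<Sum>r<n. cofit_term r) = misfit_count"
proof -
  have b: "rise d \<le> n" "1 \<le> rise d" using rise_bounds[OF d_pos d_less] by auto
  have y2: "rise d \<le> first_row d" "first_row d \<le> n"
    using rise_le_first_row first_row_le by auto
  let ?a = "first_row d - rise d" and ?c = "n - rise d"
  have ac: "?a \<le> ?c" using y2 by simp
  have cn: "?c < n" using b by simp
  have sp1: "(\<Sum>r\<in>{0..<n}. cofit_term r)
      = (\<Sum>r\<in>{0..<?a}. cofit_term r) + (\<Sum>r\<in>{?a..<n}. cofit_term r)"
    using ac cn by (intro sum.atLeastLessThan_concat[symmetric]) auto
  have sp2: "(\<Sum>r\<in>{?a..<n}. cofit_term r)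
      = (\<Sum>r\<in>{?a..<?c}. cofit_term r) + (\<Sum>r\<in>{?c..<n}. cofit_term r)"
    using ac cn by (intro sum.atLeastLessThan_concat[symmetric]) auto
  have sp3: "(\<Sum>r\<in>{?c..<n}. cofit_term r)
    = cofit_term ?c + (\<Sum>r\<in>{Suc ?c..<n}. cofit_term r)"
    using cn by (rule sum.atLeast_Suc_lessThan)
  have s1: "(\<Sum>r\<in>{0..<?a}. cofit_term r)
    = (\<Sum>r\<in>{0..<?a}. of_bool (\<not> fits_left d r))"
    by (rule sum.cong[OF refl]) (use ac in \<open>auto simp: cofit_term_def\<close>)
  have s2: "(\<Sum>r\<in>{?a..<?c}. cofit_term r)
    = (\<Sum>r\<in>{?a..<?c}. of_bool (\<not> fits_right d r))"
    by (rule sum.cong[OF refl]) (auto simp: cofit_term_def)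
  have s3: "cofit_term ?c = 0" by (simp add: cofit_term_def)
  have s6: "Suc ?c = n + 1 - rise d" using b by simp
  have s4: "(\<Sum>r\<in>{Suc ?c..<n}. cofit_term r)
      = (\<Sum>r\<in>{n + 1 - rise d..<n}. of_bool (\<not> fits_left d r))"
    unfolding s6[symmetric] by (rule sum.cong[OF refl]) (auto simp: cofit_term_def)
  have s5: "(\<Sum>r\<in>{0..<first_row d + 1 - rise d}. of_bool (\<not> fits_left d r))
      = (\<Sum>r\<in>{0..<?a}. of_bool (\<not> fits_left d r))"
  proof -
    have "first_row d + 1 - rise d = Suc ?a" using y2 by simp
    thus ?thesis using fits_left_first_row by simp
  qed
  show ?thesis
    unfolding lessThan_atLeast0 sp1 sp2 sp3 s1 s2 s3 s4 misfit_count_def s5 by simp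
qed

lemma fit_count_pair: "fit_count d + fit_count (m - d) = n - 1"
proof -
  have "n - rise d \<in> {..<n}" using rise_bounds[OF d_pos d_less] n_pos by simp
  have "fit_count d + fit_count (m - d) = (\<Sum>r<n. fit_term r + cofit_term r)"
    unfolding fit_count_eq fit_count_complement sum_cofit_term[symmetric] sum.distrib ..
  also have "\<dots> = (\<Sum>r<n. of_bool (r \<noteq> n - rise d))"
    by (rule sum.cong[OF refl]) (use fit_term_plus_cofit_term in auto)
  also have "\<dots> = card ({..<n} - {n - rise d})" by (simp add: Diff_eq Compl_eq)
  also have "\<dots> = n - 1" using \<open>n - rise d \<in> {..<n}\<close> by simp
  finally show ?thesis .
qed

end

lemma fit_count_total: "2 * (\<Sum>d\<in>{1..<m}. fit_count d) = (m - 1) * (n - 1)"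
proof -
  have r: "(\<Sum>d\<in>{1..<m}. fit_count (m - d)) = (\<Sum>d\<in>{1..<m}. fit_count d)"
    using sum.atLeastLessThan_rev[of "\<lambda>d. fit_count (m - d)" 1 m] by simp
  have "2 * (\<Sum>d\<in>{1..<m}. fit_count d)
    = (\<Sum>d\<in>{1..<m}. fit_count d + fit_count (m - d))"
    unfolding sum.distrib r by simp
  also have "\<dots> = (\<Sum>d\<in>{1..<m}. n - 1)"
    by (rule sum.cong[OF refl]) (simp add: fit_count_pair)
  also have "\<dots> = (m - 1) * (n - 1)" by simp
  finally show ?thesis .
qed

end

lemma linear_form_segment_image:
  fixes a b :: "real \<times> real"
  shows "(\<lambda>q. \<alpha> * fst q + \<beta> * snd q) ` closed_segment a b =
           closed_segment (\<alpha> * fst a + \<beta> * snd a) (\<alpha> * fst b + \<beta> * snd b)"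
  by (rule closed_segment_linear_image[symmetric]) (auto intro: linearI simp: algebra_simps)

lemma rpt_in_unit_segment:
  assumes "w = (fst v, snd v + 1) \<or> w = (fst v + 1, snd v)"
  shows "rpt p \<in> closed_segment (rpt v) (rpt w) \<longleftrightarrow> p = v \<or> p = w"
proof
  assume "rpt p \<in> closed_segment (rpt v) (rpt w)"
  then obtain u where u: "0 \<le> u" "u \<le> 1"
    "rpt p = (1 - u) *\<^sub>R rpt v + u *\<^sub>R rpt w"
    unfolding closed_segment_def by auto
  have int_01: "k = l \<or> k = l + 1" if "real_of_int k = real_of_int l + u" for k l :: int
    using that u(1,2) by linarith
  from assms show "p = v \<or> p = w"
  proof
    assume w: "w = (fst v, snd v + 1)"
    then have "fst p = fst v" and "real_of_int (snd p) = real_of_int (snd v) + u"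
      using u(3) by (auto simp: rpt_def algebra_simps)
    with int_01[of "snd p" "snd v"] show ?thesis using w by (cases p; cases v) auto
  next
    assume w: "w = (fst v + 1, snd v)"
    then have "snd p = snd v" and "real_of_int (fst p) = real_of_int (fst v) + u"
      using u(3) by (auto simp: rpt_def algebra_simps)
    with int_01[of "fst p" "fst v"] show ?thesis using w by (cases p; cases v) auto
  qed
qed auto

lemma int_discrete_ivt:
  fixes f :: "nat \<Rightarrow> int"
  assumes "f 0 \<le> c" "c \<le> f N" "\<And>i. i < N \<Longrightarrow> f (Suc i) \<le> f i + 1"
  shows "\<exists>i\<le>N. f i = c"
  using assms
proof (induction N)
  case 0 thus ?case by (intro exI[of _ 0]) simp
next
  case (Suc N)
  show ?case
  proof (cases "c \<le> f N")
    case True thus ?thesis using Suc by (meson le_SucI less_SucI)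
  next
    case False
    hence "c = f (Suc N)" using Suc.prems(2) Suc.prems(3)[of N] by simp
    thus ?thesis by (intro exI[of _ "Suc N"]) simp
  qed
qed

lemma card_pairs_eq_sum:
  assumes "finite K" "finite J"
  shows "card {(k, j). k \<in> K \<and> j \<in> J \<and> R k j}
    = (\<Sum>k\<in>K. \<Sum>j\<in>J. of_bool (R k j))"
proof -
  have "{(k, j). k \<in> K \<and> j \<in> J \<and> R k j} = (SIGMA k:K. J \<inter> {j. R k j})"
    by auto
  then show ?thesis using assms by (simp add: card_SigmaI)
qed

section \<open>Dyck paths: vertices and levels\<close>

locale coprime_dyck_path = coprime_pair +
  fixes P :: "bool list"
  assumes dyck: "dyck_path m n P"
begin

abbreviation L where "L \<equiv> length P"
definition vx :: "nat \<Rightarrow> int" where "vx i = fst (vtx P i)"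
definition vy :: "nat \<Rightarrow> int" where "vy i = snd (vtx P i)"
definition lev :: "nat \<Rightarrow> int" where "lev i = int n * vx i - int m * vy i"
definition level :: "int \<times> int \<Rightarrow> int" where "level q
  = int n * fst q - int m * snd q"

lemma vtx_coords: "vtx P i = (vx i, vy i)" by (simp add: vx_def vy_def)

lemma level_vtx: "level (vtx P i) = lev i" by (simp add: level_def lev_def vx_def vy_def)

lemma path_length: "L = m + n"
proof -
  have "length (filter Not P) + length (filter id P) = L"
    using sum_length_filter_compl[of id P] by (simp add: comp_def)
  thus ?thesis using dyck unfolding dyck_path_def by simp
qed

lemma vtx_Suc: assumes "i < L"
  shows "vtx P (Suc i) = (if P ! i then (vx i, vy i + 1) else (vx i + 1, vy i))"
  using assms unfolding vx_def vy_def vtx_def by (simp add: take_Suc_conv_app_nth)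

lemma vx_Suc: "i < L \<Longrightarrow> vx (Suc i) = (if P ! i then vx i else vx i + 1)"
  using vtx_Suc unfolding vx_def by (metis fst_conv)
lemma vy_Suc: "i < L \<Longrightarrow> vy (Suc i) = (if P ! i then vy i + 1 else vy i)"
  using vtx_Suc unfolding vy_def by (metis snd_conv)
lemma lev_Suc: "i < L \<Longrightarrow> lev (Suc i)
  = (if P ! i then lev i - int m else lev i + int n)"
  unfolding lev_def using vx_Suc vy_Suc by (simp add: algebra_simps)

lemma vtx_0: "vtx P 0 = (0, 0)" unfolding vtx_def by simp
lemma vx_0: "vx 0 = 0" and vy_0: "vy 0 = 0" and lev_0: "lev 0 = 0"
  using vtx_0 by (simp_all add: vx_def vy_def lev_def)

lemma vtx_length: "vtx P L = (int m, int n)"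
  using dyck unfolding vtx_def dyck_path_def by simp
lemma vx_length: "vx L = int m" and vy_length: "vy L = int n" and lev_length: "lev L = 0"
  using vtx_length by (simp_all add: vx_def vy_def lev_def)

lemma vx_plus_vy: "i \<le> L \<Longrightarrow> vx i + vy i = int i"
proof (induction i)
  case 0 then show ?case by (simp add: vx_0 vy_0)
next
  case (Suc i) then show ?case using vx_Suc[of i] vy_Suc[of i] by simp
qed

lemma vx_mono: "i \<le> j \<Longrightarrow> j \<le> L \<Longrightarrow> vx i \<le> vx j"
proof (induction j)
  case 0 then show ?case by simp
next
  case (Suc j) then show ?case using vx_Suc[of j] by (cases "i = Suc j") auto
qed
lemma vy_mono: "i \<le> j \<Longrightarrow> j \<le> L \<Longrightarrow> vy i \<le> vy j"
proof (induction j)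
  case 0 then show ?case by simp
next
  case (Suc j) then show ?case using vy_Suc[of j] by (cases "i = Suc j") auto
qed

lemma vx_nonneg: "i \<le> L \<Longrightarrow> 0 \<le> vx i" using vx_mono[of 0 i] vx_0 by simp
lemma vy_nonneg: "i \<le> L \<Longrightarrow> 0 \<le> vy i" using vy_mono[of 0 i] vy_0 by simp
lemma vx_le: "i \<le> L \<Longrightarrow> vx i \<le> int m" using vx_mono[of i L] vx_length by simp
lemma vy_le: "i \<le> L \<Longrightarrow> vy i \<le> int n" using vy_mono[of i L] vy_length by simp

lemma lev_nonpos: "i \<le> L \<Longrightarrow> lev i \<le> 0"
  using dyck unfolding dyck_path_def lev_def vx_def vy_def by auto

lemma vx_less: assumes "i < L" shows "vx i < int m"
proof (rule ccontr)
  assume "\<not> vx i < int m"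
  hence x: "vx i = int m" using vx_le assms by (simp add: less_le)
  have "vy i < int n" using vx_plus_vy[of i] assms path_length x by simp
  hence "lev i > 0" unfolding lev_def x
    using m_pos by (simp add: algebra_simps mult_strict_left_mono)
  thus False using lev_nonpos[of i] assms by simp
qed

lemma lev_inj: assumes "i \<le> L" "j \<le> L" "lev i = lev j" "vx i < int m" "vx j < int m"
  shows "i = j"
proof -
  have g: "0 \<le> vx i" "0 \<le> vx j" using vx_nonneg assms(1,2) by auto
  have ab: "\<bar>vx i - vx j\<bar> < int m" using g assms(4,5) by linarith
  have eq: "int n * vx i - int m * vy i = int n * vx j - int m * vy j"
    using assms(3) unfolding lev_def .
  have "vx i = vx j \<and> vy i = vy j" by (rule level_eq_in_strip[OF eq ab])
  hence "vx i + vy i = vx j + vy j" by simp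
  hence "int i = int j" using vx_plus_vy[OF assms(1)] vx_plus_vy[OF assms(2)] by linarith
  thus ?thesis by simp
qed

lemma lev_neg: assumes "0 < i" "i < L" shows "lev i < 0"
proof -
  have "lev i \<noteq> lev 0"
  proof
    assume e: "lev i = lev 0"
    have "vx i < int m" using vx_less assms by simp
    moreover have "vx 0 < int m" using vx_0 m_pos by simp
    ultimately have "i = 0" using lev_inj[of i 0] assms e by simp
    thus False using assms by simp
  qed
  moreover have "lev i \<le> 0" using lev_nonpos assms by simp
  ultimately show ?thesis using lev_0 by simp
qed

lemma lev_inj_less_length: "i < L \<Longrightarrow> j < L \<Longrightarrow> lev i
  = lev j \<Longrightarrow> i = j"
  using lev_inj[of i j] vx_less[of i] vx_less[of j] by simp

lemma vtx_inj: assumes "i \<le> L" "j \<le> L" "vtx P i = vtx P j" shows "i = j"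
proof -
  have "vx i = vx j" "vy i = vy j" using assms(3) unfolding vx_def vy_def by auto
  hence "vx i + vy i = vx j + vy j" by simp
  hence "int i = int j" using vx_plus_vy[of i] vx_plus_vy[of j] assms by linarith
  thus ?thesis by simp
qed

lemma first_step_vertical: "P ! 0"
proof (rule ccontr)
  assume "\<not> P ! 0"
  have L1: "0 < L" using path_length m_pos by simp
  hence "lev 1 = int n" using lev_Suc[of 0] \<open>\<not> P ! 0\<close> lev_0 by simp
  thus False using lev_nonpos[of 1] L1 n_pos by simp
qed

lemma last_step_horizontal: "\<not> P ! (L - 1)"
proof
  assume a: "P ! (L - 1)"
  have L1: "0 < L" using path_length m_pos by simp
  have "lev L = lev (L - 1) - int m" using lev_Suc[of "L - 1"] a L1 by simp
  hence "lev (L - 1) = int m" using lev_length by simp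
  thus False using lev_nonpos[of "L - 1"] m_pos by simp
qed

lemma rpt_vtx: "rpt (vtx P i) = (real_of_int (vx i), real_of_int (vy i))"
  by (simp add: rpt_def vx_def vy_def)

definition step_lo :: "nat \<Rightarrow> int" where "step_lo i
  = (if P ! i then lev (Suc i) else lev i)"
definition step_hi :: "nat \<Rightarrow> int" where "step_hi i
  = (if P ! i then lev i else lev (Suc i))"

lemma step_meets_level: assumes "i < L"
  shows "(\<exists>q\<in>step_seg P i. real n * fst q - real m * snd q = c) \<longleftrightarrow>
     real_of_int (step_lo i) \<le> c \<and> c \<le> real_of_int (step_hi i)"
proof -
  have "(\<lambda>q. real n * fst q + (- real m) * snd q) ` step_seg P i =
      closed_segment (real_of_int (lev i)) (real_of_int (lev (Suc i)))"
    unfolding step_seg_def linear_form_segment_image by (simp add: rpt_vtx lev_def)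
  also have "\<dots> = {real_of_int (step_lo i) .. real_of_int (step_hi i)}"
    using lev_Suc[OF assms] m_pos n_pos
    unfolding closed_segment_eq_real_ivl step_lo_def step_hi_def by auto
  finally show ?thesis by (force simp: image_iff)
qed

lemma line_through_meets_step: assumes "i < L"
  shows "line_through m n p \<inter> step_seg P i \<noteq> {}
    \<longleftrightarrow> step_lo i \<le> level p \<and> level p \<le> step_hi i"
proof -
  have "line_through m n p \<inter> step_seg P i \<noteq> {} \<longleftrightarrow>
     (\<exists>q\<in>step_seg P i. real n * fst q - real m * snd q = real_of_int (level p))"
    unfolding line_through_def diag_line_def level_def rpt_def by auto
  also have "\<dots> \<longleftrightarrow> step_lo i \<le> level p \<and> level p \<le> step_hi i"
    using step_meets_level[OF assms] by simp
  finally show ?thesis .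
qed

lemma diag_line_meets_step: assumes "i < L"
  shows "diag_line m n c \<inter> step_seg P i \<noteq> {}
    \<longleftrightarrow> real_of_int (step_lo i) \<le> c \<and> c \<le> real_of_int (step_hi i)"
proof -
  have "diag_line m n c \<inter> step_seg P i \<noteq> {} \<longleftrightarrow>
     (\<exists>q\<in>step_seg P i. real n * fst q - real m * snd q = c)"
    unfolding diag_line_def by auto
  thus ?thesis using step_meets_level[OF assms] by simp
qed

lemma rpt_in_step_seg: assumes "i < L"
  shows "rpt p \<in> step_seg P i \<longleftrightarrow> p = vtx P i \<or> p = vtx P (Suc i)"
  unfolding step_seg_def by (rule rpt_in_unit_segment) (simp add: vtx_Suc[OF assms] vtx_coords[of i])

definition crosses :: "int \<times> int \<Rightarrow> nat \<Rightarrow> bool" where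
  "crosses q j \<longleftrightarrow> j < L \<and> P ! j \<and> lev (Suc j) \<le> level q
    \<and> level q \<le> lev j
     \<and> q \<noteq> vtx P j \<and> q \<noteq> vtx P (Suc j)"

lemma kval_eq_card: "kval m n P q = card {j. crosses q j}"
proof -
  have "(j < L \<and> P ! j \<and> rpt q \<notin> step_seg P j
    \<and> line_through m n q \<inter> step_seg P j \<noteq> {})
      \<longleftrightarrow> crosses q j" for j
    proof (cases "j < L \<and> P ! j")
      case True
      have a: "rpt q \<in> step_seg P j \<longleftrightarrow> q = vtx P j \<or> q = vtx P (Suc j)"
        using rpt_in_step_seg True by simp
      have b: "line_through m n q \<inter> step_seg P j \<noteq> {}
        \<longleftrightarrow> lev (Suc j) \<le> level q \<and> level q \<le> lev j"
        using line_through_meets_step True unfolding step_lo_def step_hi_def by simp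
      show ?thesis unfolding crosses_def using a b True by auto
    next
      case False thus ?thesis unfolding crosses_def by auto
    qed
  thus ?thesis unfolding kval_def by simp
qed

definition hv_pairs :: "(nat \<times> nat) set" where
  "hv_pairs = {(i, j). i < L \<and> j < L \<and> \<not> P ! i \<and> P ! j \<and> i < j
    \<and> lev j - int m \<le> lev i + int n \<and> lev i \<le> lev j}"

lemma vx_less_iff: assumes "i < L" "j < L" "\<not> P ! i" "P ! j"
  shows "vx i < vx j \<longleftrightarrow> i < j"
proof
  assume "i < j"
  hence "vx (Suc i) \<le> vx j" using vx_mono assms by simp
  thus "vx i < vx j" using vx_Suc[of i] assms by simp
next
  assume a: "vx i < vx j"
  show "i < j"
  proof (rule ccontr)
    assume "\<not> i < j"
    hence "j \<le> i" by simp
    hence "vx j \<le> vx i" using vx_mono assms by simp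
    thus False using a by simp
  qed
qed

lemma common_diag_line_iff:
  assumes "i < L" "j < L" "\<not> P ! i" "P ! j"
  shows "(\<exists>c. diag_line m n c \<inter> step_seg P i \<noteq> {}
    \<and> diag_line m n c \<inter> step_seg P j \<noteq> {})
     \<longleftrightarrow> lev j - int m \<le> lev i + int n \<and> lev i \<le> lev j"
proof -
  have lh: "step_lo i = lev i" "step_hi i = lev i + int n"
    "step_lo j = lev j - int m" "step_hi j = lev j"
    unfolding step_lo_def step_hi_def using assms lev_Suc by auto
  show ?thesis
  proof
    assume "\<exists>c. diag_line m n c \<inter> step_seg P i \<noteq> {}
      \<and> diag_line m n c \<inter> step_seg P j \<noteq> {}"
    then obtain c where "real_of_int (step_lo i) \<le> c" "c \<le> real_of_int (step_hi i)"
      "real_of_int (step_lo j) \<le> c" "c \<le> real_of_int (step_hi j)"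
      using diag_line_meets_step assms by blast
    then show "lev j - int m \<le> lev i + int n \<and> lev i \<le> lev j" unfolding lh by linarith
  next
    assume a: "lev j - int m \<le> lev i + int n \<and> lev i \<le> lev j"
    define c where "c = real_of_int (max (lev i) (lev j - int m))"
    have "real_of_int (step_lo i) \<le> c \<and> c \<le> real_of_int (step_hi i)"
      "real_of_int (step_lo j) \<le> c \<and> c \<le> real_of_int (step_hi j)"
      unfolding lh c_def using a n_pos m_pos by auto
    then show "\<exists>c. diag_line m n c \<inter> step_seg P i \<noteq> {}
      \<and> diag_line m n c \<inter> step_seg P j \<noteq> {}"
      using diag_line_meets_step assms by blast
  qed
qed

lemma h_plus_eq_card: "h_plus m n P = card hv_pairs"
proof -
  have "(i < L \<and> j < L \<and> \<not> P ! i \<and> P ! j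
    \<and> fst (vtx P i) < fst (vtx P j) \<and>
      (\<exists>c. diag_line m n c \<inter> step_seg P i \<noteq> {}
        \<and> diag_line m n c \<inter> step_seg P j \<noteq> {}))
      \<longleftrightarrow> (i, j) \<in> hv_pairs" for i j
    using common_diag_line_iff[of i j] vx_less_iff[of i j]
    unfolding hv_pairs_def vx_def by auto
  then show ?thesis unfolding h_plus_def by simp
qed

section \<open>The lattice points seen by a vertical step\<close>

definition seen_points :: "nat \<Rightarrow> (int \<times> int) set" where
  "seen_points j = {q. crosses q j \<and> 0 \<le> fst q \<and> fst q < int m}"

text \<open>The lattice point d columns to the right of step j, taken cyclically in the strip
  0 \<le> x < m, and rise d rows above its bottom. Its level lies strictly inside the step, and by
  coprimality these points are all the points of the strip that the step sees.\<close>

definition seen_point :: "nat \<Rightarrow> nat \<Rightarrow> int \<times> int" where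
  "seen_point j d = (if vx j + int d < int m then (vx j + int d, vy j + int (rise d))
     else (vx j + int d - int m, vy j + int (rise d) - int n))"

lemma level_seen_point: "level (seen_point j d) = lev j + int n * int d - int m * int (rise d)"
  unfolding seen_point_def level_def lev_def by (simp add: algebra_simps)

lemma seen_point_in: assumes j: "j < L" "P ! j" and d: "0 < d" "d < m"
  shows "seen_point j d \<in> seen_points j"
proof -
  have b1: "int m * (int (rise d) - 1) < int n * int d" using rise_bounds_int d by simp
  have b2: "int n * int d < int m * int (rise d)" using rise_bounds_int d by simp
  have lj: "lev (Suc j) = lev j - int m" using lev_Suc j by simp
  have l1: "lev (Suc j) < level (seen_point j d)" unfolding level_seen_point lj
    using b1 by (simp add: algebra_simps)
  have l2: "level (seen_point j d) < lev j" unfolding level_seen_point using b2 by simp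
  have n1: "seen_point j d \<noteq> vtx P j" using l2 level_vtx by auto
  have n2: "seen_point j d \<noteq> vtx P (Suc j)" using l1 level_vtx by auto
  have x: "0 \<le> vx j" "vx j < int m" using vx_nonneg vx_less j by auto
  have f: "0 \<le> fst (seen_point j d) \<and> fst (seen_point j d) < int m"
    unfolding seen_point_def using x d by auto
  show ?thesis unfolding seen_points_def crosses_def using j l1 l2 n1 n2 f by auto
qed

lemma seen_point_inj: "inj_on (seen_point j) {1..<m}"
proof (rule inj_onI)
  fix d1 d2 assume a: "d1 \<in> {1..<m}" "d2 \<in> {1..<m}" "seen_point j d1 = seen_point j d2"
  hence "fst (seen_point j d1) = fst (seen_point j d2)" by simp
  hence "int d1 = int d2" using a(1,2) unfolding seen_point_def by (auto split: if_splits)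
  thus "d1 = d2" by simp
qed

lemma seen_point_surj: assumes q: "q \<in> seen_points j" shows "\<exists>d\<in>{1..<m}. q = seen_point j d"
proof -
  obtain a b where qab: "q = (a, b)" by (cases q)
  have h: "j < L" "P ! j" "lev (Suc j) \<le> level q" "level q \<le> lev j"
    "q \<noteq> vtx P j" "q \<noteq> vtx P (Suc j)" "0 \<le> a" "a < int m"
    using q unfolding seen_points_def crosses_def qab by auto
  have lj: "lev (Suc j) = lev j - int m" using lev_Suc h by simp
  have x: "0 \<le> vx j" "vx j < int m" using vx_nonneg vx_less h by auto
  have vs: "vtx P (Suc j) = (vx j, vy j + 1)" using vtx_Suc h by simp
  have lq: "level q = int n * a - int m * b" unfolding qab level_def by simp
  have lvj: "lev j = int n * vx j - int m * vy j" unfolding lev_def ..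
  consider "a = vx j" | "vx j < a" | "a < vx j" by linarith
  thus ?thesis
  proof cases
    case 1
    have "int m * (- 1) \<le> int m * (vy j - b)" "int m * (vy j - b) \<le> int m * 0"
      using h(3,4) unfolding lj lq lvj 1 by (simp_all add: algebra_simps)
    hence "b = vy j \<or> b = vy j + 1" using m_pos by (simp only: mult_le_cancel_left_pos) linarith
    thus ?thesis using h(5,6) vs 1 vtx_coords[of j] qab by auto
  next
    case 2
    define d where "d = nat (a - vx j)"
    have dd: "int d = a - vx j" "0 < d" "d < m" using 2 h x unfolding d_def by auto
    have "- int m \<le> int n * int d - int m * (b - vy j)"
      "int n * int d - int m * (b - vy j) \<le> 0"
      using h(3,4) unfolding lj lq lvj dd(1) by (simp_all add: algebra_simps)
    hence e: "b - vy j = int (rise d)" using rise_unique dd by blast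
    have "vx j + int d < int m" using dd h by simp
    hence "seen_point j d = (a, b)" unfolding seen_point_def using dd e by simp
    moreover have "d \<in> {1..<m}" using dd by simp
    ultimately show ?thesis using qab by metis
  next
    case 3
    define d where "d = nat (a - vx j + int m)"
    have dd: "int d = a - vx j + int m" "0 < d" "d < m" using 3 h x unfolding d_def by auto
    have "- int m \<le> int n * int d - int m * (b + int n - vy j)"
      "int n * int d - int m * (b + int n - vy j) \<le> 0"
      using h(3,4) unfolding lj lq lvj dd(1) by (simp_all add: algebra_simps)
    hence e: "b + int n - vy j = int (rise d)" using rise_unique dd by blast
    have "\<not> vx j + int d < int m" using dd h by simp
    hence "seen_point j d = (a, b)" unfolding seen_point_def using dd e by simp
    moreover have "d \<in> {1..<m}" using dd by simp
    ultimately show ?thesis using qab by metis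
  qed
qed

lemma seen_point_bij: assumes "j < L" "P ! j"
  shows "bij_betw (seen_point j) {1..<m} (seen_points j)"
  unfolding bij_betw_def using seen_point_inj seen_point_in seen_point_surj assms by fastforce

lemma seen_points_empty: "\<not> (j < L \<and> P ! j) \<Longrightarrow> seen_points j = {}"
  unfolding seen_points_def crosses_def by auto

lemma finite_seen_points: "finite (seen_points j)"
proof (cases "j < L \<and> P ! j")
  case True
  hence "seen_points j = seen_point j ` {1..<m}"
    using seen_point_bij[of j] unfolding bij_betw_def by auto
  thus ?thesis by simp
next
  case False thus ?thesis using seen_points_empty by simp
qed

definition outer_idx :: "nat \<Rightarrow> bool" where
  "outer_idx k \<longleftrightarrow> 0 < k \<and> k < L \<and> P ! (k - 1) \<and> \<not> P ! k"

definition internal_idx :: "nat \<Rightarrow> bool" where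
  "internal_idx k \<longleftrightarrow> 0 < k \<and> k < L \<and> \<not> P ! (k - 1) \<and> P ! k"

lemma vertices_between_steps_eq:
  "{vtx P (Suc i) | i. Suc i < L \<and> R (P ! i) (P ! Suc i)}
     = vtx P ` {k. 0 < k \<and> k < L \<and> R (P ! (k - 1)) (P ! k)}"
proof (rule set_eqI)
  fix v
  show "v \<in> {vtx P (Suc i) | i. Suc i < L \<and> R (P ! i) (P ! Suc i)} \<longleftrightarrow>
    v \<in> vtx P ` {k. 0 < k \<and> k < L \<and> R (P ! (k - 1)) (P ! k)}"
  proof
    assume "v \<in> {vtx P (Suc i) | i. Suc i < L \<and> R (P ! i) (P ! Suc i)}"
    then obtain i where "v = vtx P (Suc i)" "Suc i < L" "R (P ! i) (P ! Suc i)" by auto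
    then show "v \<in> vtx P ` {k. 0 < k \<and> k < L \<and> R (P ! (k - 1)) (P ! k)}"
      by (intro image_eqI[of _ _ "Suc i"]) auto
  next
    assume "v \<in> vtx P ` {k. 0 < k \<and> k < L \<and> R (P ! (k - 1)) (P ! k)}"
    then obtain k where "v = vtx P k" "0 < k" "k < L" "R (P ! (k - 1)) (P ! k)" by auto
    then show "v \<in> {vtx P (Suc i) | i. Suc i < L \<and> R (P ! i) (P ! Suc i)}"
      by (intro CollectI exI[of _ "k - 1"]) auto
  qed
qed

lemma outer_vertices_eq: "outer_vertices P = vtx P ` {k. outer_idx k}"
  using vertices_between_steps_eq[of "\<lambda>a b. a \<and> \<not> b"]
  unfolding outer_vertices_def outer_idx_def by simp

lemma internal_vertices_eq: "internal_vertices P = vtx P ` {k. internal_idx k}"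
  using vertices_between_steps_eq[of "\<lambda>a b. \<not> a \<and> b"]
  unfolding internal_vertices_def internal_idx_def by simp

abbreviation inner_pts where "inner_pts \<equiv> inner_points m n P"

lemma vx_attains: assumes "0 \<le> a" "a \<le> int m" shows "\<exists>j\<le>L. vx j = a"
  using int_discrete_ivt[of vx a L] assms vx_0 vx_length vx_Suc by force

lemma vy_attains: assumes "0 \<le> b" "b \<le> int n" shows "\<exists>j\<le>L. vy j = b"
  using int_discrete_ivt[of vy b L] assms vy_0 vy_length vy_Suc by force

lemma inner_pts_props: assumes "q \<in> inner_pts"
  shows "0 < fst q" "fst q < int m" "\<And>k. k \<le> L \<Longrightarrow> q \<noteq> vtx P k"
proof -
  obtain a b where q: "q = (a, b)" by (cases q)
  have h: "0 \<le> a" "a \<le> int m" "int n * a < int m * b"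
    "\<And>j. j \<le> L \<Longrightarrow> vx j = a \<Longrightarrow> b < vy j"
    using assms unfolding q inner_points_def vx_def vy_def by auto
  show "0 < fst q"
  proof (rule ccontr)
    assume "\<not> 0 < fst q"
    hence "a = 0" using h q by simp
    hence "b < 0" using h(4)[of 0] vx_0 vy_0 by simp
    hence "int m * b < 0" using m_pos by (simp add: mult_pos_neg)
    thus False using h(3) \<open>a = 0\<close> by simp
  qed
  show "fst q < int m"
  proof (rule ccontr)
    assume "\<not> fst q < int m"
    hence "a = int m" using h q by simp
    hence "b < int n" using h(4)[of L] vx_length vy_length by simp
    hence "int m * b < int m * int n" using m_pos by simp
    thus False using h(3) \<open>a = int m\<close> by (simp add: mult.commute)
  qed
  show "\<And>k. k \<le> L \<Longrightarrow> q \<noteq> vtx P k"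
  proof
    fix k assume k: "k \<le> L" "q = vtx P k"
    hence "a = vx k" "b = vy k" unfolding q vx_def vy_def by (metis fst_conv, metis snd_conv)
    thus False using h(4)[OF k(1)] by simp
  qed
qed

lemma finite_inner_pts: "finite inner_pts"
proof -
  have "inner_pts \<subseteq> {0..int m} \<times> {- 1..int n}"
  proof
    fix q assume a: "q \<in> inner_pts"
    obtain a b where q: "q = (a, b)" by (cases q)
    have h: "0 \<le> a" "a \<le> int m" "int n * a < int m * b"
      "\<And>j. j \<le> L \<Longrightarrow> vx j = a \<Longrightarrow> b < vy j"
      using a unfolding q inner_points_def vx_def vy_def by auto
    have "0 < b" using above_diag_pos h(1,3) .
    moreover have "b \<le> int n"
    proof -
      obtain j where j: "j \<le> L" "vx j = a" using vx_attains h(1,2) by blast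
      thus ?thesis using h(4)[OF j] vy_le[OF j(1)] by simp
    qed
    ultimately show "q \<in> {0..int m} \<times> {- 1..int n}" using h q by auto
  qed
  thus ?thesis by (rule finite_subset) simp
qed

lemma seen_points_column: assumes "q \<in> seen_points j" shows "fst q \<noteq> vx j"
proof -
  obtain d where d: "d \<in> {1..<m}" "q = seen_point j d" using seen_point_surj assms by blast
  show ?thesis using d unfolding seen_point_def by (auto split: if_splits)
qed

text \<open>A point seen by the vertical step j is admissible if it lies weakly under the path on the
  side facing j: to the right of j the bottoms of vertical steps count as under the path, to the
  left the ends of horizontal steps do.\<close>

definition right_admissible :: "int \<times> int \<Rightarrow> bool" where
  "right_admissible q \<longleftrightarrow> q \<in> inner_pts \<or> (\<exists>k. 0 < k \<and> k < L \<and> P ! k \<and> q = vtx P k)"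
definition left_admissible :: "int \<times> int \<Rightarrow> bool" where
  "left_admissible q \<longleftrightarrow>
     q \<in> inner_pts \<or> (\<exists>k. 0 < k \<and> k < L \<and> \<not> P ! (k - 1) \<and> q = vtx P k)"
definition admissible :: "nat \<Rightarrow> int \<times> int \<Rightarrow> bool" where
  "admissible j q \<longleftrightarrow> (vx j < fst q \<and> right_admissible q) \<or> (fst q < vx j \<and> left_admissible q)"

definition vertex_admissible :: "nat \<Rightarrow> nat \<Rightarrow> bool" where
  "vertex_admissible j k \<longleftrightarrow> (vx j < vx k \<and> P ! k) \<or> (vx k < vx j \<and> \<not> P ! (k - 1))"

lemma vtx_in_seen_points_iff:
  assumes "0 < k" "k < L" shows "vtx P k \<in> seen_points j \<longleftrightarrow> crosses (vtx P k) j"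
  using vx_nonneg[of k] vx_less[of k] assms unfolding seen_points_def vx_def by auto

lemma card_admissible_split:
  "card {q\<in>seen_points j. admissible j q} = card {q\<in>seen_points j. q \<in> inner_pts} +
     card {k\<in>{0<..<L}. crosses (vtx P k) j \<and> vertex_admissible j k}"
proof -
  let ?K = "{k\<in>{0<..<L}. crosses (vtx P k) j \<and> vertex_admissible j k}"
  have "{q\<in>seen_points j. admissible j q} = {q\<in>seen_points j. q \<in> inner_pts} \<union> vtx P ` ?K"
  proof (intro set_eqI iffI)
    fix q assume q: "q \<in> {q\<in>seen_points j. admissible j q}"
    show "q \<in> {q\<in>seen_points j. q \<in> inner_pts} \<union> vtx P ` ?K"
    proof (cases "q \<in> inner_pts")
      case False
      then obtain k where "0 < k" "k < L" "q = vtx P k"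
        "(vx j < vx k \<and> P ! k) \<or> (vx k < vx j \<and> \<not> P ! (k - 1))"
        using q unfolding admissible_def right_admissible_def left_admissible_def vx_def by auto
      then show ?thesis using q vtx_in_seen_points_iff unfolding vertex_admissible_def by auto
    qed (use q in simp)
  next
    fix q assume "q \<in> {q\<in>seen_points j. q \<in> inner_pts} \<union> vtx P ` ?K"
    then consider "q \<in> seen_points j" "q \<in> inner_pts" | k where "k \<in> ?K" "q = vtx P k"
      by blast
    then show "q \<in> {q\<in>seen_points j. admissible j q}"
    proof cases
      case 1
      then have "fst q < vx j \<or> vx j < fst q" using seen_points_column[of q j] by linarith
      then show ?thesis using 1 unfolding admissible_def right_admissible_def left_admissible_def
        by auto
    next
      case 2
      then show ?thesis using vtx_in_seen_points_iff[of k j]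
        unfolding admissible_def right_admissible_def left_admissible_def
          vertex_admissible_def vx_def
        by auto
    qed
  qed
  moreover have "{q\<in>seen_points j. q \<in> inner_pts} \<inter> vtx P ` ?K = {}"
    by (auto dest: inner_pts_props(3)[OF _ less_imp_le])
  moreover have "inj_on (vtx P) ?K" by (intro inj_onI vtx_inj) auto
  ultimately show ?thesis using finite_seen_points by (simp add: card_Un_disjoint card_image)
qed

lemma vertex_admissible_decomp: assumes "0 < k" "k < L" "crosses (vtx P k) j"
  shows "int (of_bool (vertex_admissible j k))
    = of_bool (internal_idx k) + of_bool (vx k < vx j \<and> \<not> P ! k)
     + of_bool (vx j < vx k \<and> P ! (k - 1)) - of_bool (outer_idx k)"
proof -
  have "vtx P k \<in> seen_points j" using vtx_in_seen_points_iff assms by simp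
  hence ne: "vx k \<noteq> vx j" using seen_points_column unfolding vx_def by auto
  show ?thesis unfolding vertex_admissible_def internal_idx_def outer_idx_def using assms ne
    by (cases "P ! k"; cases "P ! (k - 1)"; cases "vx k < vx j") auto
qed

text \<open>The level drops by m along a vertical step and rises by n along a horizontal one, so the
  signed crossings of a fixed level telescope.\<close>

lemma crossing_telescope: assumes "q \<le> L"
  shows "(\<Sum>i<q. of_bool (P ! i \<and> lev (Suc i) \<le> t \<and> t < lev i)
                - of_bool (\<not> P ! i \<and> lev i \<le> t \<and> t < lev (Suc i)) :: int)
    = of_bool (t < lev 0) - of_bool (t < lev q)"
  using assms
proof (induction q)
  case 0 thus ?case by simp
next
  case (Suc q)
  have q: "q < L" using Suc by simp
  show ?case
  proof (cases "P ! q")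
    case True
    hence "lev (Suc q) = lev q - int m" using lev_Suc q by simp
    thus ?thesis using Suc True m_pos by auto
  next
    case False
    hence "lev (Suc q) = lev q + int n" using lev_Suc q by simp
    thus ?thesis using Suc False n_pos by auto
  qed
qed

lemma card_down_crossings_eq_up_crossings:
  assumes "q \<le> L" "t < 0" "t < lev q"
  shows "card {i. i < q \<and> P ! i \<and> lev (Suc i) \<le> t \<and> t < lev i}
       = card {i. i < q \<and> \<not> P ! i \<and> lev i \<le> t \<and> t < lev (Suc i)}"
proof -
  have "(\<Sum>i<q. of_bool (P ! i \<and> lev (Suc i) \<le> t \<and> t < lev i) :: int)
      = (\<Sum>i<q. of_bool (\<not> P ! i \<and> lev i \<le> t \<and> t < lev (Suc i)))"
    using crossing_telescope[OF assms(1), of t] assms(2,3) lev_0 by (simp add: sum_subtractf)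
  moreover have "{..<q} \<inter> {i. Q i} = {i. i < q \<and> Q i}" for Q by auto
  ultimately show ?thesis by simp
qed

lemma column_start:
  assumes "k \<le> L"
  obtains p where "p \<le> k" "vx p = vx k" "\<And>i. i < p \<Longrightarrow> vx i < vx k"
    "\<And>i. p \<le> i \<Longrightarrow> i < k \<Longrightarrow> P ! i"
proof
  define p where "p = (LEAST p. vx p = vx k)"
  show pk: "p \<le> k" unfolding p_def by (rule Least_le) simp
  show vp: "vx p = vx k" unfolding p_def by (rule LeastI) simp
  show "vx i < vx k" if "i < p" for i
  proof -
    have "vx i \<noteq> vx k"
      using not_less_Least[of i "\<lambda>p. vx p = vx k"] that unfolding p_def by blast
    moreover have "vx i \<le> vx p" using vx_mono that pk assms by simp
    ultimately show ?thesis using vp by simp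
  qed
  show "P ! i" if "p \<le> i" "i < k" for i
  proof -
    have "vx p \<le> vx i" "vx (Suc i) \<le> vx k" using vx_mono that assms by auto
    hence "vx (Suc i) = vx i" using vp vx_mono[of i "Suc i"] that assms by simp
    thus "P ! i" using vx_Suc[of i] that assms by (auto split: if_splits)
  qed
qed

lemma left_crossings_before_column:
  assumes k: "0 < k" "k < L"
    and p: "p \<le> k - 1" "vx p = vx k" "\<And>i. i < p \<Longrightarrow> vx i < vx k"
    "\<And>i. p \<le> i \<Longrightarrow> i < k - 1 \<Longrightarrow> P ! i"
    and lev_ne: "\<And>i. i \<le> p \<Longrightarrow> lev i \<noteq> lev k"
  shows "{i. i < L \<and> \<not> P ! i \<and> i < k - 1 \<and> lev i < lev k \<and> lev k \<le> lev (Suc i)}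
      = {i. i < p \<and> \<not> P ! i \<and> lev i \<le> lev k \<and> lev k < lev (Suc i)}"
    and "{j. j < L \<and> crosses (vtx P k) j \<and> vx j < vx k}
      = {i. i < p \<and> P ! i \<and> lev (Suc i) \<le> lev k \<and> lev k < lev i}"
proof (rule set_eqI)
  fix i
  show "i \<in> {i. i < L \<and> \<not> P ! i \<and> i < k - 1 \<and> lev i < lev k \<and> lev k \<le> lev (Suc i)} \<longleftrightarrow>
    i \<in> {i. i < p \<and> \<not> P ! i \<and> lev i \<le> lev k \<and> lev k < lev (Suc i)}"
  proof (cases "\<not> P ! i \<and> i < p")
    case True
    then have "lev i \<noteq> lev k" "lev (Suc i) \<noteq> lev k" using lev_ne by auto
    then show ?thesis using True p(1) k by auto
  next
    case False
    then show ?thesis using p(4)[of i] by auto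
  qed
next
  show "{j. j < L \<and> crosses (vtx P k) j \<and> vx j < vx k}
      = {i. i < p \<and> P ! i \<and> lev (Suc i) \<le> lev k \<and> lev k < lev i}"
  proof (rule set_eqI)
    fix j
    show "j \<in> {j. j < L \<and> crosses (vtx P k) j \<and> vx j < vx k} \<longleftrightarrow>
      j \<in> {i. i < p \<and> P ! i \<and> lev (Suc i) \<le> lev k \<and> lev k < lev i}"
    proof (cases "j < p")
      case True
      then have "Suc j < k" using p(1) k by simp
      then have "vtx P k \<noteq> vtx P j" "vtx P k \<noteq> vtx P (Suc j)"
        using vtx_inj[of k j] vtx_inj[of k "Suc j"] k by auto
      moreover have "lev j \<noteq> lev k" using lev_ne True by simp
      ultimately show ?thesis using True p(1,3) k unfolding crosses_def level_vtx by auto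
    next
      case False
      then have "\<not> vx j < vx k" if "j < L" using vx_mono[of p j] that p(2) by auto
      then show ?thesis using False by auto
    qed
  qed
qed

text \<open>Before the column of k the path starts and ends above the level of k, so it crosses that
  level downwards (along vertical steps) as often as upwards (along horizontal steps).\<close>

lemma card_left_crossings:
  assumes k: "0 < k" "k < L" "P ! (k - 1)"
  shows "card {i. i < L \<and> \<not> P ! i \<and> i < k - 1 \<and> lev i < lev k \<and> lev k \<le> lev (Suc i)}
       = card {j. j < L \<and> crosses (vtx P k) j \<and> vx j < vx k}"
proof -
  have col_k: "vx (k - 1) = vx k" using vx_Suc[of "k - 1"] k by simp
  have "k - 1 \<le> L" using k by simp
  then obtain p where p: "p \<le> k - 1" "vx p = vx k" "\<And>i. i < p \<Longrightarrow> vx i < vx k"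
    "\<And>i. p \<le> i \<Longrightarrow> i < k - 1 \<Longrightarrow> P ! i"
    by (rule column_start[of "k - 1", unfolded col_k]) blast
  have "p \<le> L" using p(1) k by simp
  then have "vy p < vy k" using vx_plus_vy[of k] vx_plus_vy[of p] p(1,2) k by simp
  then have "lev k < lev p" unfolding lev_def p(2) using m_pos by simp
  then have "card {i. i < p \<and> P ! i \<and> lev (Suc i) \<le> lev k \<and> lev k < lev i}
      = card {i. i < p \<and> \<not> P ! i \<and> lev i \<le> lev k \<and> lev k < lev (Suc i)}"
    using card_down_crossings_eq_up_crossings lev_neg k p(1) by simp
  moreover have "lev i \<noteq> lev k" if "i \<le> p" for i
    using lev_inj_less_length[of i k] that p(1) k by fastforce
  ultimately show ?thesis using left_crossings_before_column[OF k(1,2) p] by simp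
qed

section \<open>Double counting\<close>

lemma kval_eq_sum: "int (kval m n P q) = (\<Sum>j<L. of_bool (crosses q j))"
proof -
  have "{j. crosses q j} = {..<L} \<inter> {j. crosses q j}" unfolding crosses_def by auto
  then show ?thesis unfolding kval_eq_card by simp
qed

lemma sum_kval_strip:
  assumes "finite A" "\<And>q. q \<in> A \<Longrightarrow> 0 \<le> fst q \<and> fst q < int m"
  shows "(\<Sum>q\<in>A. kval m n P q) = (\<Sum>j<L. card {q\<in>seen_points j. q \<in> A})"
proof -
  have strip: "{q\<in>seen_points j. q \<in> A} = A \<inter> {q. crosses q j}" for j
    unfolding seen_points_def using assms(2) by auto
  have "int (\<Sum>q\<in>A. kval m n P q) = (\<Sum>j<L. \<Sum>q\<in>A. of_bool (crosses q j))"
    by (simp add: of_nat_sum kval_eq_sum del: sum_of_bool_eq) (rule sum.swap)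
  also have "\<dots> = int (\<Sum>j<L. card {q\<in>seen_points j. q \<in> A})"
    using assms(1) by (simp add: of_nat_sum strip)
  finally show ?thesis by (simp only: of_nat_eq_iff)
qed

text \<open>A horizontal step i and a vertical step j to its right share a diagonal line iff their
  level ranges overlap. Either the start of i lies in the range of j, and then the vertex i sees
  the step j, or the top of j lies strictly inside the range of i.\<close>

lemma hv_pairs_near:
  "{(i, j). (i, j) \<in> hv_pairs \<and> lev j - int m \<le> lev i}
     = {(k, j). k \<in> {0<..<L} \<and> j \<in> {..<L} \<and> crosses (vtx P k) j \<and> vx k < vx j \<and> \<not> P ! k}"
    (is "?A = ?B")
proof (rule set_eqI, clarify)
  fix i j
  show "(i, j) \<in> ?A \<longleftrightarrow> (i, j) \<in> ?B"
  proof (cases "i < L \<and> j < L \<and> \<not> P ! i \<and> P ! j")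
    case True
    then have lj: "lev (Suc j) = lev j - int m" using lev_Suc by simp
    have "0 < i" using True first_step_vertical by (cases i) auto
    moreover have "vx i < vx j \<longleftrightarrow> i < j" using vx_less_iff True by simp
    moreover have "i < j \<Longrightarrow> vtx P i \<noteq> vtx P j \<and> vtx P i \<noteq> vtx P (Suc j)"
      using vtx_inj[of i j] vtx_inj[of i "Suc j"] True by auto
    ultimately show ?thesis using True lj n_pos
      unfolding hv_pairs_def crosses_def level_vtx by auto
  next
    case False
    then show ?thesis unfolding hv_pairs_def crosses_def by auto
  qed
qed

lemma card_hv_pairs_far_column:
  assumes j: "j < L"
  shows "card {i. (i, j) \<in> hv_pairs \<and> lev i < lev j - int m}
       = of_bool (P ! j) * card {j'. j' < L \<and> crosses (vtx P (Suc j)) j' \<and> vx j' < vx (Suc j)}"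
proof (cases "P ! j")
  case True
  have "j \<noteq> L - 1" using last_step_horizontal True by auto
  then have sj: "Suc j < L" using j by simp
  have lj: "lev (Suc j) = lev j - int m" using lev_Suc j True by simp
  have far_eq: "{i. (i, j) \<in> hv_pairs \<and> lev i < lev j - int m} =
      {i. i < L \<and> \<not> P ! i \<and> i < Suc j - 1 \<and> lev i < lev (Suc j) \<and> lev (Suc j) \<le> lev (Suc i)}"
    (is "?F = ?G")
  proof (rule set_eqI)
    fix i
    show "i \<in> ?F \<longleftrightarrow> i \<in> ?G"
    proof (cases "i < L \<and> \<not> P ! i")
      case True
      then have "lev (Suc i) = lev i + int n" using lev_Suc by simp
      then show ?thesis using True \<open>P ! j\<close> j lj m_pos unfolding hv_pairs_def by auto
    next
      case False
      then show ?thesis unfolding hv_pairs_def by auto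
    qed
  qed
  show ?thesis using card_left_crossings[of "Suc j"] sj True unfolding far_eq by simp
next
  case False
  then show ?thesis unfolding hv_pairs_def by simp
qed

definition cross_sum :: "(nat \<Rightarrow> nat \<Rightarrow> bool) \<Rightarrow> int" where
  "cross_sum R = (\<Sum>k\<in>{0<..<L}. \<Sum>j<L. of_bool (crosses (vtx P k) j \<and> R k j))"

lemma cross_sum_eq_card:
  "cross_sum R =
     int (card {(k, j). k \<in> {0<..<L} \<and> j \<in> {..<L} \<and> crosses (vtx P k) j \<and> R k j})"
  unfolding cross_sum_def by (subst card_pairs_eq_sum) (simp_all add: of_nat_sum)

lemma sum_kval_vertices:
  assumes "K \<subseteq> {0<..<L}"
  shows "int (\<Sum>q\<in>vtx P ` K. kval m n P q) = cross_sum (\<lambda>k j. k \<in> K)"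
proof -
  have "inj_on (vtx P) K" by (intro inj_onI vtx_inj) (use assms in auto)
  then have "int (\<Sum>q\<in>vtx P ` K. kval m n P q)
    = (\<Sum>k\<in>K. int (kval m n P (vtx P k)))"
    by (simp add: sum.reindex of_nat_sum)
  also have "\<dots> = (\<Sum>k\<in>{0<..<L}. if k \<in> K then int (kval m n P (vtx P k)) else 0)"
    using assms by (simp add: sum.inter_restrict[symmetric] Int_absorb1 Int_absorb2)
  also have "\<dots> = cross_sum (\<lambda>k j. k \<in> K)"
    unfolding cross_sum_def kval_eq_sum by (intro sum.cong refl) simp
  finally show ?thesis .
qed

lemma cross_sum_left_of_vertex:
  "cross_sum (\<lambda>k j. vx j < vx k \<and> P ! (k - 1)) =
     int (\<Sum>k\<in>{0<..<L}.
       of_bool (P ! (k - 1)) * card {j. j < L \<and> crosses (vtx P k) j \<and> vx j < vx k})"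
proof -
  have "{j. j < L \<and> crosses (vtx P k) j \<and> vx j < vx k}
    = {..<L} \<inter> {j. crosses (vtx P k) j \<and> vx j < vx k}"
    for k by auto
  then show ?thesis unfolding cross_sum_def of_nat_sum by (intro sum.cong) auto
qed

lemma card_hv_pairs_far:
  "card {(i, j). i \<in> {..<L} \<and> j \<in> {..<L} \<and> (i, j) \<in> hv_pairs
    \<and> lev i < lev j - int m}
     = (\<Sum>k\<in>{0<..<L}.
         of_bool (P ! (k - 1)) * card {j. j < L \<and> crosses (vtx P k) j \<and> vx j < vx k})"
proof -
  define C where
    "C k = of_bool (P ! (k - 1)) * card {j. j < L \<and> crosses (vtx P k) j
      \<and> vx j < vx k}" for k
  have "card {(i, j). i \<in> {..<L} \<and> j \<in> {..<L} \<and> (i, j) \<in> hv_pairs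
    \<and> lev i < lev j - int m}
      = (\<Sum>i<L. \<Sum>j<L. of_bool ((i, j) \<in> hv_pairs \<and> lev i < lev j - int m))"
    by (rule card_pairs_eq_sum) simp_all
  also have "\<dots> = (\<Sum>j<L. \<Sum>i<L. of_bool ((i, j) \<in> hv_pairs \<and> lev i < lev j - int m))"
    by (rule sum.swap)
  also have "\<dots> = (\<Sum>j<L. C (Suc j))"
  proof (rule sum.cong[OF refl])
    fix j assume "j \<in> {..<L}"
    have "{..<L} \<inter> {i. (i, j) \<in> hv_pairs \<and> lev i < lev j - int m}
        = {i. (i, j) \<in> hv_pairs \<and> lev i < lev j - int m}" unfolding hv_pairs_def by auto
    then show "(\<Sum>i<L. of_bool ((i, j) \<in> hv_pairs \<and> lev i < lev j - int m))
      = C (Suc j)"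
      using card_hv_pairs_far_column[of j] \<open>j \<in> {..<L}\<close> unfolding C_def by simp
  qed
  also have "\<dots> = (\<Sum>j<L - 1. C (Suc j))"
  proof -
    have "L = Suc (L - 1)" using path_length m_pos by simp
    moreover have "C L = 0" using last_step_horizontal unfolding C_def by simp
    ultimately show ?thesis by (metis sum.lessThan_Suc add_0_right)
  qed
  also have "\<dots> = (\<Sum>k\<in>{0 + 1..<(L - 1) + 1}. C k)"
    by (simp only: sum.shift_bounds_nat_ivl lessThan_atLeast0 Suc_eq_plus1)
  also have "\<dots> = (\<Sum>k\<in>{0<..<L}. C k)"
  proof -
    have "0 < L" using path_length m_pos by simp
    then show ?thesis by (simp add: atLeastSucLessThan_greaterThanLessThan)
  qed
  finally show ?thesis unfolding C_def .
qed

lemma card_hv_pairs: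
  "int (card hv_pairs) =
     cross_sum (\<lambda>k j. vx k < vx j \<and> \<not> P ! k) + cross_sum (\<lambda>k j. vx j < vx k \<and> P ! (k - 1))"
proof -
  define near where "near = {(i, j). (i, j) \<in> hv_pairs \<and> lev j - int m \<le> lev i}"
  define far where
    "far = {(i, j). i \<in> {..<L} \<and> j \<in> {..<L} \<and> (i, j) \<in> hv_pairs
      \<and> lev i < lev j - int m}"
  have "hv_pairs \<subseteq> {..<L} \<times> {..<L}" unfolding hv_pairs_def by auto
  then have "hv_pairs = near \<union> far" "near \<inter> far = {}" "finite near" "finite far"
    unfolding near_def far_def by (auto intro: finite_subset)
  then have "card hv_pairs = card near + card far" by (metis card_Un_disjoint)
  moreover have "int (card near) = cross_sum (\<lambda>k j. vx k < vx j \<and> \<not> P ! k)"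
    unfolding near_def hv_pairs_near cross_sum_eq_card ..
  moreover have "int (card far) = cross_sum (\<lambda>k j. vx j < vx k \<and> P ! (k - 1))"
    unfolding far_def card_hv_pairs_far cross_sum_left_of_vertex ..
  ultimately show ?thesis by simp
qed

lemma sum_card_vertex_admissible:
  "(\<Sum>j<L. int (card {k\<in>{0<..<L}. crosses (vtx P k) j \<and> vertex_admissible j k}))
     = cross_sum (\<lambda>k j. vertex_admissible j k)"
proof -
  have "(\<Sum>j<L. int (card {k\<in>{0<..<L}. crosses (vtx P k) j \<and> vertex_admissible j k}))
      = (\<Sum>j<L. \<Sum>k\<in>{0<..<L}. of_bool (crosses (vtx P k) j \<and> vertex_admissible j k))"
    by (simp add: Int_def)
  also have "\<dots> = cross_sum (\<lambda>k j. vertex_admissible j k)"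
    unfolding cross_sum_def by (rule sum.swap)
  finally show ?thesis .
qed

lemma cross_sum_vertex_admissible:
  "cross_sum (\<lambda>k j. vertex_admissible j k) =
     cross_sum (\<lambda>k j. internal_idx k) + cross_sum (\<lambda>k j. vx k < vx j \<and> \<not> P ! k)
     + cross_sum (\<lambda>k j. vx j < vx k \<and> P ! (k - 1)) - cross_sum (\<lambda>k j. outer_idx k)"
proof -
  let ?c = "\<lambda>k j. crosses (vtx P k) j"
  have "cross_sum (\<lambda>k j. vertex_admissible j k) =
      (\<Sum>k\<in>{0<..<L}. \<Sum>j<L. of_bool (?c k j \<and> internal_idx k)
        + of_bool (?c k j \<and> vx k < vx j \<and> \<not> P ! k)
        + of_bool (?c k j \<and> vx j < vx k \<and> P ! (k - 1))
        - of_bool (?c k j \<and> outer_idx k))"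
    unfolding cross_sum_def
  proof (intro sum.cong refl)
    fix k j assume "k \<in> {0<..<L}"
    then show "of_bool (?c k j \<and> vertex_admissible j k) =
        of_bool (?c k j \<and> internal_idx k) + of_bool (?c k j \<and> vx k < vx j \<and> \<not> P ! k)
        + of_bool (?c k j \<and> vx j < vx k \<and> P ! (k - 1))
        - (of_bool (?c k j \<and> outer_idx k) :: int)"
      using vertex_admissible_decomp[of k j] by (cases "?c k j") simp_all
  qed
  then show ?thesis unfolding cross_sum_def by (simp only: sum.distrib sum_subtractf)
qed

lemma crossing_identity:
  "int (h_plus m n P) + int (\<Sum>q\<in>inner_pts \<union> internal_vertices P. kval m n P q)
     - int (\<Sum>q\<in>outer_vertices P. kval m n P q)
   = int (\<Sum>j<L. card {q\<in>seen_points j. admissible j q})"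
proof -
  have "inner_pts \<inter> internal_vertices P = {}"
    unfolding internal_vertices_eq internal_idx_def
    by (auto dest: inner_pts_props(3)[OF _ less_imp_le])
  moreover have "finite (internal_vertices P)"
    unfolding internal_vertices_eq internal_idx_def by simp
  ultimately have "(\<Sum>q\<in>inner_pts \<union> internal_vertices P. kval m n P q)
      = (\<Sum>q\<in>inner_pts. kval m n P q) + (\<Sum>q\<in>internal_vertices P. kval m n P q)"
    using finite_inner_pts by (simp add: sum.union_disjoint)
  moreover have "(\<Sum>q\<in>inner_pts. kval m n P q)
    = (\<Sum>j<L. card {q\<in>seen_points j. q \<in> inner_pts})"
    using sum_kval_strip[OF finite_inner_pts] inner_pts_props by fastforce
  moreover have "int (\<Sum>q\<in>internal_vertices P. kval m n P q)
    = cross_sum (\<lambda>k j. internal_idx k)"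
    unfolding internal_vertices_eq by (subst sum_kval_vertices) (auto simp: internal_idx_def)
  moreover have "int (\<Sum>q\<in>outer_vertices P. kval m n P q)
    = cross_sum (\<lambda>k j. outer_idx k)"
    unfolding outer_vertices_eq by (subst sum_kval_vertices) (auto simp: outer_idx_def)
  moreover have "int (\<Sum>j<L. card {q\<in>seen_points j. admissible j q})
      = (\<Sum>j<L. int (card {q\<in>seen_points j. q \<in> inner_pts}))
        + cross_sum (\<lambda>k j. vertex_admissible j k)"
    using card_admissible_split sum_card_vertex_admissible by (simp add: of_nat_sum sum.distrib)
  ultimately show ?thesis
    using h_plus_eq_card card_hv_pairs cross_sum_vertex_admissible by (simp add: of_nat_sum)
qed

lemma vert_step_exists: assumes "y < n" shows "\<exists>j. j < L \<and> P ! j \<and> vy j = int y"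
proof -
  have "\<exists>i\<le>L. vy i = int y + 1" using vy_attains[of "int y + 1"] assms by simp
  define i0 where "i0 = (LEAST i. vy i = int y + 1)"
  have y1: "vy i0 = int y + 1"
    unfolding i0_def by (rule LeastI_ex) (use \<open>\<exists>i\<le>L. vy i = int y + 1\<close> in blast)
  obtain i where i: "i \<le> L" "vy i = int y + 1"
    using \<open>\<exists>i\<le>L. vy i = int y + 1\<close> by blast
  have i0L: "i0 \<le> L"
    using Least_le[of "\<lambda>i. vy i = int y + 1" i] i unfolding i0_def by simp
  have i00: "0 < i0" using y1 vy_0 by (cases i0) auto
  have ne: "vy (i0 - 1) \<noteq> int y + 1"
    using not_less_Least[of "i0 - 1" "\<lambda>i. vy i = int y + 1"] i00
    unfolding i0_def by simp
  have st: "vy i0 = (if P ! (i0 - 1) then vy (i0 - 1) + 1 else vy (i0 - 1))"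
    using vy_Suc[of "i0 - 1"] i00 i0L by simp
  have pv: "P ! (i0 - 1)" using st ne y1 by (auto split: if_splits)
  hence "vy (i0 - 1) = int y" using st y1 by simp
  thus ?thesis using pv i00 i0L by (intro exI[of _ "i0 - 1"]) auto
qed

lemma vert_step_unique:
  assumes "j1 < L" "P ! j1" "j2 < L" "P ! j2" "vy j1 = vy j2" shows "j1 = j2"
proof (rule ccontr)
  assume "j1 \<noteq> j2"
  then consider "j1 < j2" | "j2 < j1" by linarith
  thus False
  proof cases
    case 1
    hence "vy (Suc j1) \<le> vy j2" using vy_mono[of "Suc j1" j2] assms by simp
    moreover have "vy (Suc j1) = vy j1 + 1" using vy_Suc[of j1] assms by simp
    ultimately show False using assms(5) by linarith
  next
    case 2
    hence "vy (Suc j2) \<le> vy j1" using vy_mono[of "Suc j2" j1] assms by simp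
    moreover have "vy (Suc j2) = vy j2 + 1" using vy_Suc[of j2] assms by simp
    ultimately show False using assms(5) by linarith
  qed
qed

definition vert_step :: "nat \<Rightarrow> nat" where
  "vert_step y = (THE j. j < L \<and> P ! j \<and> vy j = int y)"

lemma vert_step_props:
  assumes "y < n" shows "vert_step y < L" "P ! vert_step y" "vy (vert_step y) = int y"
proof -
  obtain j where j: "j < L" "P ! j" "vy j = int y" using vert_step_exists[OF assms] by blast
  have "\<exists>!j. j < L \<and> P ! j \<and> vy j = int y"
  proof (rule ex1I[of _ j])
    show "j < L \<and> P ! j \<and> vy j = int y" using j by simp
    fix j' assume "j' < L \<and> P ! j' \<and> vy j' = int y"
    thus "j' = j" using vert_step_unique[of j' j] j by simp
  qed
  hence "vert_step y < L \<and> P ! vert_step y \<and> vy (vert_step y) = int y"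
    unfolding vert_step_def by (rule theI')
  thus "vert_step y < L" "P ! vert_step y" "vy (vert_step y) = int y" by auto
qed

lemma vert_step_row: assumes "j < L" "P ! j" shows "vert_step (nat (vy j)) = j" "nat (vy j) < n"
proof -
  have y0: "0 \<le> vy j" using vy_nonneg assms by simp
  have "vy j < vy (Suc j)" using vy_Suc assms by simp
  moreover have "vy (Suc j) \<le> int n" using vy_le assms by simp
  ultimately show yn: "nat (vy j) < n" using y0 by simp
  have e: "vy (vert_step (nat (vy j))) = vy j" using vert_step_props(3)[OF yn] y0 by simp
  show "vert_step (nat (vy j)) = j"
    using vert_step_unique[OF vert_step_props(1)[OF yn] vert_step_props(2)[OF yn] assms e] .
qed

definition col :: "nat \<Rightarrow> nat" where "col y = nat (vx (vert_step y))"

lemma int_col: assumes "y < n" shows "int (col y) = vx (vert_step y)"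
proof -
  have "0 \<le> vx (vert_step y)"
    using vx_nonneg[of "vert_step y"] vert_step_props(1)[OF assms] by simp
  thus ?thesis unfolding col_def by simp
qed

lemma vert_step_mono: assumes "y \<le> z" "z < n" shows "vert_step y \<le> vert_step z"
proof (rule ccontr)
  assume "\<not> vert_step y \<le> vert_step z"
  hence "Suc (vert_step z) \<le> vert_step y" by simp
  hence "vy (Suc (vert_step z)) \<le> vy (vert_step y)"
    using vy_mono[of "Suc (vert_step z)" "vert_step y"] vert_step_props(1)[of y] assms by simp
  moreover have "vy (Suc (vert_step z)) = vy (vert_step z) + 1"
    using vy_Suc[of "vert_step z"] vert_step_props(1,2)[of z] assms by simp
  ultimately show False using vert_step_props(3)[of z] vert_step_props(3)[of y] assms by simp
qed

lemma staircase_col: "staircase m n col"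
proof (unfold_locales)
  fix y z assume a: "y \<le> z" "z < n"
  have "vx (vert_step y) \<le> vx (vert_step z)"
    using vx_mono[of "vert_step y" "vert_step z"] vert_step_mono[OF a] vert_step_props(1)[of z] a
      by simp
  thus "col y \<le> col z" unfolding col_def by simp
next
  fix y assume a: "y < n"
  have "lev (vert_step y) \<le> 0"
    using lev_nonpos[of "vert_step y"] vert_step_props(1)[OF a] by simp
  hence "int n * int (col y) \<le> int m * int y" unfolding lev_def
    using int_col[OF a] vert_step_props(3)[OF a] by simp
  thus "n * col y \<le> m * y" by (simp only: of_nat_mult[symmetric] of_nat_le_iff)
qed

sublocale staircase m n col by (rule staircase_col)

lemma vtx_vert_step: assumes "y < n" shows "vtx P (vert_step y) = (int (col y), int y)"
  using vtx_coords[of "vert_step y"] int_col[OF assms] vert_step_props(3)[OF assms] by simp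

lemma inner_pts_iff:
  assumes a: "0 \<le> a" "a < int m" and ab: "int n * a < int m * b"
  shows "(a, b) \<in> inner_pts \<longleftrightarrow> b < int n \<and> int (col (nat b)) < a"
proof -
  have b0: "0 < b" using above_diag_pos[OF a(1) ab] .
  define y where "y = nat b"
  have yb: "int y = b" using b0 unfolding y_def by simp
  show ?thesis
  proof
    assume "(a, b) \<in> inner_pts"
    then have inn: "\<And>i. i \<le> L \<Longrightarrow> vx i = a \<Longrightarrow> b < vy i"
      unfolding inner_points_def vx_def vy_def by auto
    obtain i0 where i0: "i0 \<le> L" "vx i0 = a" using vx_attains a by fastforce
    have bn: "b < int n" using inn[OF i0] vy_le[OF i0(1)] by simp
    then have yn: "y < n" using yb by simp
    have "vx (vert_step y) < a"
    proof (rule ccontr)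
      assume "\<not> vx (vert_step y) < a"
      moreover have "vx (vert_step y) \<noteq> a"
        using inn[of "vert_step y"] vert_step_props[OF yn] yb by fastforce
      ultimately have "i0 < vert_step y" using vx_mono[of "vert_step y" i0] i0 by fastforce
      then have "vy i0 \<le> vy (vert_step y)" using vy_mono vert_step_props(1)[OF yn] by simp
      then show False using inn[OF i0] vert_step_props(3)[OF yn] yb by simp
    qed
    then show "b < int n \<and> int (col (nat b)) < a"
      using bn int_col[OF yn] unfolding y_def by simp
  next
    assume h: "b < int n \<and> int (col (nat b)) < a"
    then have yn: "y < n" using yb by simp
    define j where "j = vert_step y"
    have j: "j < L" "P ! j" "vy j = b" "vx j < a"
      using vert_step_props[OF yn] int_col[OF yn] h yb unfolding j_def y_def by auto
    have "b < vy i" if "i \<le> L" "vx i = a" for i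
    proof -
      have "Suc j \<le> i" using vx_mono[of i j] that j by fastforce
      then have "vy (Suc j) \<le> vy i" using vy_mono that by simp
      then show ?thesis using vy_Suc[of j] j by simp
    qed
    then show "(a, b) \<in> inner_pts" unfolding inner_points_def vx_def vy_def using a ab by auto
  qed
qed

lemma vertical_start_iff:
  assumes "0 < b"
  shows "(\<exists>k. 0 < k \<and> k < L \<and> P ! k \<and> (a, b) = vtx P k)
    \<longleftrightarrow> b < int n \<and> int (col (nat b)) = a"
proof
  assume "\<exists>k. 0 < k \<and> k < L \<and> P ! k \<and> (a, b) = vtx P k"
  then obtain k where k: "k < L" "P ! k" "a = vx k" "b = vy k" using vtx_coords by auto
  then show "b < int n \<and> int (col (nat b)) = a" using vert_step_row[OF k(1,2)] int_col by simp
next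
  assume h: "b < int n \<and> int (col (nat b)) = a"
  then have yn: "nat b < n" using assms by (simp add: nat_less_iff)
  then have "vtx P (vert_step (nat b)) = (a, b)" using vtx_vert_step h assms by simp
  moreover have "0 < vert_step (nat b)"
    using vert_step_props(3)[OF yn] assms vy_0 by (cases "vert_step (nat b)") auto
  ultimately show "\<exists>k. 0 < k \<and> k < L \<and> P ! k \<and> (a, b) = vtx P k"
    using vert_step_props[OF yn] by metis
qed

lemma right_admissible_iff:
  assumes a: "0 \<le> a" "a < int m" and ab: "int n * a < int m * b"
  shows "right_admissible (a, b) \<longleftrightarrow> b < int n \<and> int (col (nat b)) \<le> a"
  unfolding right_admissible_def inner_pts_iff[OF assms] vertical_start_iff[OF above_diag_pos[OF
    a(1) ab]]
  by auto

lemma horizontal_end_col: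
  assumes k: "0 < k" "k < L" "\<not> P ! (k - 1)"
  shows "vy k \<le> int n" "int (col (nat (vy k) - 1)) < vx k"
proof -
  show "vy k \<le> int n" using vy_le k by simp
  have vk: "vx k = vx (k - 1) + 1" "vy k = vy (k - 1)"
    using vx_Suc[of "k - 1"] vy_Suc[of "k - 1"] k by auto
  have "int n * vx k < int m * vy k" using lev_neg[OF k(1,2)] unfolding lev_def by simp
  moreover have "0 \<le> vx k" using vx_nonneg k by simp
  ultimately have "0 < vy k" using above_diag_pos by blast
  then have yn: "nat (vy k) - 1 < n" and yb: "int (nat (vy k) - 1) = vy k - 1"
    using vy_le[of k] k by auto
  define j where "j = vert_step (nat (vy k) - 1)"
  have j: "j < L" "P ! j" "vy j = vy k - 1" using vert_step_props[OF yn] yb unfolding j_def by auto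
  have "j < k"
  proof (rule ccontr)
    assume "\<not> j < k"
    then show False using vy_mono[of k j] j by simp
  qed
  moreover have "j \<noteq> k - 1" using j(2) k(3) by auto
  ultimately have "Suc j \<le> k - 1" by simp
  then have "vx (Suc j) \<le> vx (k - 1)" using vx_mono[of "Suc j" "k - 1"] k by simp
  moreover have "vx (Suc j) = vx j" using vx_Suc[of j] j by simp
  moreover have "int (col (nat (vy k) - 1)) = vx j" using int_col[OF yn] unfolding j_def by simp
  ultimately show "int (col (nat (vy k) - 1)) < vx k" using vk by simp
qed

lemma left_admissible_if:
  assumes a: "0 \<le> a" "a < int m" and ab: "int n * a < int m * b"
    and h: "b \<le> int n" "int (col (nat b - 1)) < a"
  shows "left_admissible (a, b)"
proof -
  have b0: "0 < b" using above_diag_pos[OF a(1) ab] .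
  then have yn: "nat b - 1 < n" and yb: "int (nat b - 1) = b - 1" using h(1) by auto
  define j where "j = vert_step (nat b - 1)"
  have j: "j < L" "P ! j" "vy j = b - 1" "vx j < a"
    using vert_step_props[OF yn] int_col[OF yn] h yb unfolding j_def by auto
  have below: "b \<le> vy i" if "i \<le> L" "vx i = a" for i
  proof -
    have "Suc j \<le> i" using vx_mono[of i j] that j by fastforce
    then have "vy (Suc j) \<le> vy i" using vy_mono that by simp
    then show ?thesis using vy_Suc[of j] j by simp
  qed
  show ?thesis
  proof (cases "\<exists>i\<le>L. vx i = a \<and> vy i = b")
    case True
    then obtain i where i: "i \<le> L" "vx i = a" "vy i = b" by blast
    have i0: "0 < i" using i(3) b0 vy_0 by (cases i) auto
    have iL: "i < L" using i vx_length a by (cases "i = L") auto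
    have "\<not> P ! (i - 1)"
    proof
      assume "P ! (i - 1)"
      then have "vx (i - 1) = a" "vy (i - 1) = b - 1"
        using vx_Suc[of "i - 1"] vy_Suc[of "i - 1"] i i0 iL by auto
      moreover have "i - 1 \<le> L" using i by simp
      ultimately show False using below[of "i - 1"] by simp
    qed
    moreover have "(a, b) = vtx P i" using vtx_coords[of i] i by simp
    ultimately show ?thesis unfolding left_admissible_def using i0 iL by auto
  next
    case False
    then have "b < vy i" if "i \<le> L" "vx i = a" for i
      using below[OF that] that by fastforce
    then have "(a, b) \<in> inner_pts" unfolding inner_points_def vx_def vy_def using a ab by auto
    then show ?thesis unfolding left_admissible_def by simp
  qed
qed

lemma left_admissible_iff:
  assumes a: "0 \<le> a" "a < int m" and ab: "int n * a < int m * b"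
  shows "left_admissible (a, b)
    \<longleftrightarrow> b \<le> int n \<and> int (col (nat b - 1)) < a"
proof
  assume "left_admissible (a, b)"
  then consider "(a, b) \<in> inner_pts" | k where "0 < k" "k < L" "\<not> P ! (k - 1)" "(a, b)
    = vtx P k"
    unfolding left_admissible_def by auto
  then show "b \<le> int n \<and> int (col (nat b - 1)) < a"
  proof cases
    case 1
    then have "b < int n" "int (col (nat b)) < a" using inner_pts_iff[OF assms] by auto
    moreover have "col (nat b - 1) \<le> col (nat b)"
      using col_mono[of "nat b - 1" "nat b"] \<open>b < int n\<close> above_diag_pos[OF a(1) ab]
      by (simp add: nat_less_iff)
    ultimately show ?thesis by simp
  next
    case 2
    then show ?thesis using horizontal_end_col[OF 2(1-3)] vtx_coords[of k] by simp
  qed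
qed (use left_admissible_if[OF assms] in blast)



lemma admissible_seen_point_right:
  assumes y: "y < n" and d: "0 < d" "col y + d < m"
  shows "admissible (vert_step y) (seen_point (vert_step y) d) \<longleftrightarrow> fits_right d y"
proof -
  define j where "j = vert_step y"
  have j: "j < L" "P ! j" "vx j = int (col y)" "vy j = int y"
    using vert_step_props[OF y] int_col[OF y] unfolding j_def by auto
  have q: "seen_point j d = (int (col y) + int d, int y + int (rise d))"
    unfolding seen_point_def using j d by simp
  have "level (seen_point j d) < lev j"
    unfolding level_seen_point using rise_bounds_int d by simp
  then have ab: "int n * (int (col y) + int d) < int m * (int y + int (rise d))"
    using lev_nonpos[of j] j unfolding q level_def by simp
  have "admissible j (seen_point j d) \<longleftrightarrow> right_admissible (seen_point j d)"
    unfolding admissible_def q using j d by auto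
  also have "\<dots> \<longleftrightarrow> int y + int (rise d) < int n
      \<and> int (col (nat (int y + int (rise d)))) \<le> int (col y) + int d"
    unfolding q by (rule right_admissible_iff) (use d ab in auto)
  also have "\<dots> \<longleftrightarrow> fits_right d y"
    unfolding fits_right_def col_ext_def using d by (auto simp: nat_add_distrib)
  finally show ?thesis unfolding j_def .
qed

lemma admissible_seen_point_left:
  assumes y: "y < n" and d: "0 < d" "d < m" "\<not> col y + d < m"
  shows "admissible (vert_step y) (seen_point (vert_step y) d) \<longleftrightarrow> fits_left d y"
proof -
  define j where "j = vert_step y"
  have j: "j < L" "P ! j" "vx j = int (col y)" "vy j = int y"
    using vert_step_props[OF y] int_col[OF y] unfolding j_def by auto
  have q: "seen_point j d = (int (col y) + int d - int m, int y + int (rise d) - int n)"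
    unfolding seen_point_def using j d by simp
  have "level (seen_point j d) < lev j"
    unfolding level_seen_point using rise_bounds_int d by simp
  then have ab: "int n * (int (col y) + int d - int m) < int m * (int y + int (rise d) - int n)"
    using lev_nonpos[of j] j unfolding q level_def by simp
  have a0: "0 \<le> int (col y) + int d - int m" "int (col y) + int d - int m < int m"
    using d col_less[OF y] by auto
  have ge: "n + 1 \<le> y + rise d" using above_diag_pos[OF a0(1) ab] by simp
  have le: "int y + int (rise d) - int n \<le> int n" using y rise_bounds(3)[OF d(1,2)] by simp
  have e: "nat (int y + int (rise d) - int n) - 1 = y + rise d - 1 - n" using ge by simp
  have "admissible j (seen_point j d) \<longleftrightarrow> left_admissible (seen_point j d)"
    unfolding admissible_def q using j d by auto
  also have "\<dots> \<longleftrightarrow> int (col (y + rise d - 1 - n)) < int (col y) + int d - int m"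
    unfolding q left_admissible_iff[OF a0 ab] e using le by simp
  also have "\<dots> \<longleftrightarrow> fits_left d y"
    unfolding fits_left_def col_ext_def using ge by auto
  finally show ?thesis unfolding j_def .
qed

lemma admissible_seen_point_iff:
  assumes "y < n" "0 < d" "d < m"
  shows "admissible (vert_step y) (seen_point (vert_step y) d)
    \<longleftrightarrow> (if col y + d < m then fits_right d y else fits_left d y)"
  using admissible_seen_point_right admissible_seen_point_left assms by simp

lemma card_admissible_offsets:
  assumes "j < L" "P ! j"
  shows "card {q\<in>seen_points j. admissible j q} = card {d\<in>{1..<m}. admissible j (seen_point j d)}"
proof -
  have b: "bij_betw (seen_point j) {1..<m} (seen_points j)" using seen_point_bij assms .
  then have "seen_points j = seen_point j ` {1..<m}" by (simp add: bij_betw_def)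
  then have "{q\<in>seen_points j. admissible j q}
      = seen_point j ` {d\<in>{1..<m}. admissible j (seen_point j d)}" by auto
  moreover have "inj_on (seen_point j) {d\<in>{1..<m}. admissible j (seen_point j d)}"
    using b unfolding bij_betw_def by (auto intro: inj_on_subset)
  ultimately show ?thesis by (simp add: card_image)
qed

lemma vert_step_bij: "bij_betw vert_step {..<n} {j. j < L \<and> P ! j}"
proof (rule bij_betw_byWitness[of _ "\<lambda>j. nat (vy j)"])
  show "\<forall>y\<in>{..<n}. nat (vy (vert_step y)) = y" using vert_step_props(3) by simp
  show "\<forall>j\<in>{j. j < L \<and> P ! j}. vert_step (nat (vy j)) = j"
    using vert_step_row by auto
  show "vert_step ` {..<n} \<subseteq> {j. j < L \<and> P ! j}" using vert_step_props by auto
  show "(\<lambda>j. nat (vy j)) ` {j. j < L \<and> P ! j} \<subseteq> {..<n}"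
    using vert_step_row by auto
qed

lemma card_admissible_vert_step:
  assumes y: "y < n"
  shows "card {q\<in>seen_points (vert_step y). admissible (vert_step y) q} =
    (\<Sum>d\<in>{1..<m}. if col y + d < m then of_bool (fits_right d y) else of_bool (fits_left d y))"
proof -
  have "card {q\<in>seen_points (vert_step y). admissible (vert_step y) q}
      = (\<Sum>d\<in>{1..<m}. of_bool (admissible (vert_step y) (seen_point (vert_step y) d)))"
    using card_admissible_offsets vert_step_props y by (simp add: Int_def)
  also have "\<dots> =
      (\<Sum>d\<in>{1..<m}. if col y + d < m then of_bool (fits_right d y) else of_bool (fits_left d y))"
    by (rule sum.cong[OF refl]) (use admissible_seen_point_iff y in auto)
  finally show ?thesis .
qed

lemma sum_card_admissible:
  "(\<Sum>j<L. card {q\<in>seen_points j. admissible j q}) = (\<Sum>d\<in>{1..<m}. fit_count d)"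
proof -
  have "(\<Sum>j<L. card {q\<in>seen_points j. admissible j q})
      = (\<Sum>j\<in>{j. j < L \<and> P ! j}. card {q\<in>seen_points j. admissible j q})"
    by (rule sum.mono_neutral_right) (auto simp: seen_points_empty)
  also have "\<dots> = (\<Sum>y<n. card {q\<in>seen_points (vert_step y). admissible (vert_step y) q})"
    by (rule sum.reindex_bij_betw[OF vert_step_bij, symmetric])
  also have "\<dots> = (\<Sum>d\<in>{1..<m}. fit_count d)"
    unfolding fit_count_def by (simp add: card_admissible_vert_step) (rule sum.swap)
  finally show ?thesis .
qed

section \<open>The farthest outer vertex\<close>

text \<open>The outer vertex farthest from the diagonal has the lowest level on the whole path, so the
  only vertical step its line meets is the one ending at it, and its k-value vanishes.\<close>

lemma lowest_outer_vertex:
  obtains k where "outer_idx k" "\<And>i. i \<le> L \<Longrightarrow> lev k \<le> lev i"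
proof -
  have fin: "finite (lev ` {..L})" "lev ` {..L} \<noteq> {}" by auto
  have "Min (lev ` {..L}) \<in> lev ` {..L}" by (rule Min_in[OF fin])
  then obtain k where "k \<in> {..L}" "Min (lev ` {..L}) = lev k" by blast
  then have k: "k \<le> L" "lev k = Min (lev ` {..L})" by auto
  have mn: "\<And>i. i \<le> L \<Longrightarrow> lev k \<le> lev i" using k Min_le[OF fin(1)] by simp
  have L0: "0 < L" using path_length m_pos by simp
  have l1: "lev 1 = - int m" using lev_Suc[of 0] first_step_vertical L0 lev_0 by simp
  have "k \<noteq> 0"
  proof
    assume "k = 0"
    then show False using mn[of 1] l1 lev_0 m_pos L0 by simp
  qed
  moreover have "k \<noteq> L" using mn[of 1] l1 lev_length m_pos L0 by auto
  ultimately have kk: "0 < k" "k < L" using k by auto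
  have "P ! (k - 1)"
  proof (rule ccontr)
    assume "\<not> P ! (k - 1)"
    then have "lev k = lev (k - 1) + int n" using lev_Suc[of "k - 1"] kk by simp
    moreover have "lev k \<le> lev (k - 1)" using mn[of "k - 1"] kk by simp
    ultimately show False using n_pos by simp
  qed
  moreover have "\<not> P ! k"
  proof
    assume "P ! k"
    then have "lev (Suc k) = lev k - int m" using lev_Suc[of k] kk by simp
    then show False using mn[of "Suc k"] kk m_pos by simp
  qed
  ultimately show ?thesis using that[of k] kk mn unfolding outer_idx_def by simp
qed

lemma kval_lowest_outer_vertex:
  assumes k: "outer_idx k" and kmin: "\<And>i. i \<le> L \<Longrightarrow> lev k \<le> lev i"
  shows "kval m n P (vtx P k) = 0"
proof -
  have "\<not> crosses (vtx P k) j" for j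
  proof
    assume "crosses (vtx P k) j"
    then have h: "j < L" "P ! j" "lev (Suc j) \<le> lev k" "vtx P k \<noteq> vtx P (Suc j)"
      unfolding crosses_def level_vtx by auto
    have e: "lev k = lev (Suc j)" using h kmin[of "Suc j"] by simp
    have "lev k < 0" using lev_neg k unfolding outer_idx_def by simp
    then have "Suc j \<noteq> L" using e lev_length by auto
    then have "k = Suc j" using lev_inj_less_length[of k "Suc j"] e h(1) k unfolding outer_idx_def by simp
    then show False using h by simp
  qed
  then have "{j. crosses (vtx P k) j} = {}" by blast
  then show ?thesis unfolding kval_eq_card by (simp only: card.empty)
qed

lemma diag_dist_eq: "diag_dist m n p = real_of_int \<bar>level p\<bar> / sqrt ((real m)\<^sup>2 + (real n)\<^sup>2)"
  unfolding diag_dist_def level_def rpt_def by simp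

lemma sum_kval_vstar: "(\<Sum>v\<in>vstar m n P. kval m n P v) = (\<Sum>v\<in>outer_vertices P. kval m n P v)"
proof -
  define M where
    "M = {v \<in> outer_vertices P. \<forall>w \<in> outer_vertices P. diag_dist m n w \<le> diag_dist m n v}"
  have fin: "finite (outer_vertices P)" unfolding outer_vertices_eq outer_idx_def by simp
  have sub: "M \<subseteq> outer_vertices P" unfolding M_def by auto
  have zero: "kval m n P v = 0" if "v \<in> M" for v
  proof -
    from that obtain k where k: "outer_idx k" "v = vtx P k"
      unfolding M_def outer_vertices_eq by auto
    obtain k' where k': "outer_idx k'" "\<And>i. i \<le> L \<Longrightarrow> lev k' \<le> lev i"
      using lowest_outer_vertex by blast
    have "diag_dist m n (vtx P k') \<le> diag_dist m n v"
      using that k' unfolding M_def outer_vertices_eq by auto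
    moreover have "0 < sqrt ((real m)\<^sup>2 + (real n)\<^sup>2)" using m_pos by (simp add: add_pos_nonneg)
    ultimately have "\<bar>lev k'\<bar> \<le> \<bar>lev k\<bar>"
      unfolding diag_dist_eq k(2) level_vtx by (simp add: divide_le_cancel)
    moreover have "lev k' < 0" "lev k < 0" using lev_neg k k' unfolding outer_idx_def by auto
    ultimately have "lev k \<le> lev i" if "i \<le> L" for i using k'(2)[OF that] by simp
    then show ?thesis using kval_lowest_outer_vertex k by simp
  qed
  have "(\<Sum>v\<in>outer_vertices P. kval m n P v)
      = (\<Sum>v\<in>outer_vertices P - M. kval m n P v) + (\<Sum>v\<in>M. kval m n P v)"
    using sum.subset_diff[OF sub fin] by simp
  then show ?thesis unfolding vstar_def M_def[symmetric] using zero by simp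
qed

end


theorem mainTheorem2:
  fixes m n :: nat and P :: "bool list"
  assumes "0 < m" and "0 < n" and "coprime m n" and "dyck_path m n P"
  shows "real (h_plus m n P) - (real m - 1) * (real n - 1) / 2
           - (\<Sum>v \<in> vstar m n P. real (kval m n P v))
         = - (\<Sum>p \<in> inner_points m n P \<union> internal_vertices P. real (kval m n P p))"
proof -
  interpret coprime_dyck_path m n P by unfold_locales (use assms in auto)
  have "int (h_plus m n P) + int (\<Sum>p\<in>inner_points m n P \<union> internal_vertices P. kval m n P p)
      - int (\<Sum>v\<in>outer_vertices P. kval m n P v) = int (\<Sum>d\<in>{1..<m}. fit_count d)"
    using crossing_identity sum_card_admissible by simp
  then have "real (h_plus m n P) + real (\<Sum>p\<in>inner_points m n P \<union> internal_vertices P. kval m n P p)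
      - real (\<Sum>v\<in>outer_vertices P. kval m n P v) = real (\<Sum>d\<in>{1..<m}. fit_count d)"
    by (metis (mono_tags) of_int_add of_int_diff of_int_of_nat_eq)
  moreover have "2 * real (\<Sum>d\<in>{1..<m}. fit_count d) = (real m - 1) * (real n - 1)"
    using arg_cong[OF fit_count_total, of real] assms by (simp add: of_nat_diff)
  moreover have "(\<Sum>v\<in>vstar m n P. real (kval m n P v)) = (\<Sum>v\<in>outer_vertices P. real (kval m n P v))"
    using arg_cong[OF sum_kval_vstar, of real] by (simp add: of_nat_sum)
  ultimately show ?thesis by (simp add: of_nat_sum)
qed

end
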